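(* For each $p>0$, there exists a $\Sigma^0_p$ equivalence relation $E$ on $\omega$ which is complete under finitary reducibility among $\Sigma^0_p$ equivalence relations (every $\Sigma^0_p$ equivalence relation $F$ satisfies $F\leq_c^{<\omega}E$), but is not complete under computable reducibility among them (some $\Sigma^0_p$ equivalence relation $F$ has $F\not\leq_cE$).
   Context: For equivalence relations $E,F$ on $\omega$, $F\leq_cE$ means there is a total computable $g$ with $x\,F\,y\iff g(x)\,E\,g(y)$ for all $x,y$. $F\leq_c^{<\omega}E$ means there is one total computable function which, given $n\ge1$ and an $n$-tuple $(x_0,\dots,x_{n-1})$, outputs an $n$-tuple $(y_0,\dots,y_{n-1})$ with $x_i\,F\,x_j\iff y_i\,E\,y_j$ for all $i<j<n$. A $\Sigma^0_p$ equivalence relation is an equivalence relation on $\omega$ that is a $\Sigma^0_p$ subset of $\omega\times\omega$. *)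

theory Defs
  imports Main "HOL-Library.Nat_Bijection"
begin

text \<open>A function on
  nat lists of arity n is only relevant on lists of length n.\<close>

inductive total_rec :: "nat \<Rightarrow> (nat list \<Rightarrow> nat) \<Rightarrow> bool" where
  zero: "total_rec n (\<lambda>_. 0)"
| succ: "total_rec 1 (\<lambda>xs. Suc (hd xs))"
| proj: "i < n \<Longrightarrow> total_rec n (\<lambda>xs. xs ! i)"
| comp: "\<lbrakk> total_rec m f; length gs = m; \<forall>g\<in>set gs. total_rec n g \<rbrakk>
         \<Longrightarrow> total_rec n (\<lambda>xs. f (map (\<lambda>g. g xs) gs))"
| prim: "\<lbrakk> total_rec n g; total_rec (n + 2) h \<rbrakk>
         \<Longrightarrow> total_rec (Suc n)
               (\<lambda>xs. rec_nat (g (tl xs)) (\<lambda>k r. h (k # r # tl xs)) (hd xs))"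
| mu: "\<lbrakk> total_rec (Suc n) f; \<forall>xs. length xs = n \<longrightarrow> (\<exists>y. f (y # xs) = 0) \<rbrakk>
         \<Longrightarrow> total_rec n (\<lambda>xs. LEAST y. f (y # xs) = 0)"
| ext: "\<lbrakk> total_rec n f; \<forall>xs. length xs = n \<longrightarrow> g xs = f xs \<rbrakk> \<Longrightarrow> total_rec n g"

definition computable1 :: "(nat \<Rightarrow> nat) \<Rightarrow> bool" where
  "computable1 g \<longleftrightarrow> total_rec 1 (\<lambda>xs. g (hd xs))"

definition decidable_rel :: "nat \<Rightarrow> (nat list \<Rightarrow> bool) \<Rightarrow> bool" where
  "decidable_rel n R \<longleftrightarrow>
     (\<exists>f. total_rec n f \<and> (\<forall>xs. length xs = n \<longrightarrow> (R xs \<longleftrightarrow> f xs = 0)))"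

text \<open>Sigma^0_p relations of arity n: Sigma_0 = computable,
  Sigma_{p+1} = existential projection of the complement of a Sigma_p relation
  (i.e. of a Pi_p relation).\<close>

fun sigma_rel :: "nat \<Rightarrow> nat \<Rightarrow> (nat list \<Rightarrow> bool) \<Rightarrow> bool" where
  "sigma_rel 0 n R = decidable_rel n R"
| "sigma_rel (Suc p) n R =
     (\<exists>Q. sigma_rel p (Suc n) Q \<and>
          (\<forall>xs. length xs = n \<longrightarrow> (R xs \<longleftrightarrow> (\<exists>y. \<not> Q (y # xs)))))"

definition sigma_eqrel :: "nat \<Rightarrow> (nat \<Rightarrow> nat \<Rightarrow> bool) \<Rightarrow> bool" where
  "sigma_eqrel p E \<longleftrightarrow> equivp E \<and> sigma_rel p 2 (\<lambda>xs. E (xs ! 0) (xs ! 1))"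

definition computably_reducible :: "(nat \<Rightarrow> nat \<Rightarrow> bool) \<Rightarrow> (nat \<Rightarrow> nat \<Rightarrow> bool) \<Rightarrow> bool" where
  "computably_reducible F E \<longleftrightarrow>
     (\<exists>g. computable1 g \<and> (\<forall>x y. F x y \<longleftrightarrow> E (g x) (g y)))"

text \<open>Finitary reducibility: a single total computable function, acting on
  codes (list_encode) of nonempty finite tuples, sending each n-tuple to an
  n-tuple that reflects F-equivalences as E-equivalences.\<close>

definition finitary_reducible :: "(nat \<Rightarrow> nat \<Rightarrow> bool) \<Rightarrow> (nat \<Rightarrow> nat \<Rightarrow> bool) \<Rightarrow> bool" where
  "finitary_reducible F E \<longleftrightarrow>
     (\<exists>g. computable1 g \<and>
        (\<forall>xs. xs \<noteq> [] \<longrightarrow>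
           (\<exists>ys. g (list_encode xs) = list_encode ys \<and> length ys = length xs \<and>
              (\<forall>i j. i < j \<and> j < length xs \<longrightarrow>
                  (F (xs ! i) (xs ! j) \<longleftrightarrow> E (ys ! i) (ys ! j))))))"

end

theory Submission
  imports Defs "HOL-Library.More_List"
begin

text \<open>Kleene's normal form theorem, derived here for the given notion of total recursive
  function, yields universal \<open>\<Sigma>\<^sub>p\<close> relations \<open>U\<^sub>e\<close>. The equivalence relation \<open>E\<close> lives on
  triples \<open>(e, c, i)\<close> where \<open>c\<close> codes a finite list and \<open>i\<close> is a position in it: two
  positions of the same block \<open>(e, c)\<close> are \<open>E\<close>-equivalent iff they are joined by a path whose
  steps \<open>i \<rightarrow> i'\<close> satisfy \<open>U\<^sub>e (c\<^sub>i, c\<^sub>i')\<close> or \<open>U\<^sub>e (c\<^sub>i', c\<^sub>i)\<close>. A path is a finite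
  object with boundedly many \<open>\<Sigma>\<^sub>p\<close> steps, so \<open>E\<close> is \<open>\<Sigma>\<^sub>p\<close>.

  If \<open>F = U\<^sub>e\<close> is an equivalence relation, paths in the block \<open>(e, xs)\<close> reflect \<open>F\<close> exactly,
  so the tuple \<open>xs\<close> is finitarily reduced to \<open>E\<close> by sending it to the positions of its own
  block. But every \<open>E\<close>-class is finite, so a computable reduction of the \<open>\<Sigma>\<^sub>1\<close> relation
  ``\<open>x = y\<close> or \<open>x, y \<in> K\<close>'' to \<open>E\<close> would exhibit the halting set \<open>K\<close> as the preimage of
  a finite set.\<close>

section \<open>Closure properties of total recursive functions\<close>

lemma total_rec_ext: "total_rec n f \<Longrightarrow> (\<And>xs. length xs = n \<Longrightarrow> g xs = f xs) \<Longrightarrow> total_rec n g"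
  using total_rec.ext by blast

lemma total_rec_const: "total_rec n (\<lambda>_. c)"
proof (induction c)
  case 0
  then show ?case by (rule total_rec.zero)
next
  case (Suc c)
  have "total_rec n (\<lambda>xs. (\<lambda>ys. Suc (hd ys)) (map (\<lambda>g. g xs) [\<lambda>_. c]))"
    by (rule total_rec.comp[OF total_rec.succ]) (use Suc in auto)
  then show ?case by simp
qed

lemma total_rec_comp_upt:
  assumes "total_rec m f" "\<And>i. i < m \<Longrightarrow> total_rec n (G i)"
  shows "total_rec n (\<lambda>xs. f (map (\<lambda>i. G i xs) [0..<m]))"
proof -
  have "total_rec n (\<lambda>xs. f (map (\<lambda>g. g xs) (map G [0..<m])))"
    by (rule total_rec.comp[OF assms(1)]) (use assms(2) in auto)
  then show ?thesis by (simp add: comp_def)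
qed

lemma total_rec_rec_nat:
  assumes a: "total_rec n a" and g: "total_rec n g" and h: "total_rec (Suc (Suc n)) h"
  shows "total_rec n (\<lambda>xs. rec_nat (g xs) (\<lambda>k r. h (k # r # xs)) (a xs))"
proof -
  have P: "total_rec (Suc n) (\<lambda>xs. rec_nat (g (tl xs)) (\<lambda>k r. h (k # r # tl xs)) (hd xs))"
    using total_rec.prim[OF g] h by (simp add: numeral_2_eq_2)
  define G where "G i = (if i = 0 then a else (\<lambda>xs. xs ! (i - 1)))" for i
  have "total_rec n (\<lambda>xs. (\<lambda>xs. rec_nat (g (tl xs)) (\<lambda>k r. h (k # r # tl xs)) (hd xs))
      (map (\<lambda>i. G i xs) [0..<Suc n]))"
    by (rule total_rec_comp_upt[OF P]) (auto simp: G_def a intro: total_rec.proj)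
  moreover have "map (\<lambda>i. G i xs) [0..<Suc n] = a xs # xs" if "length xs = n" for xs
  proof -
    have "[0..<Suc n] = 0 # map Suc [0..<n]" by (simp add: map_Suc_upt upt_conv_Cons)
    then show ?thesis using that map_nth[of xs] by (simp add: G_def comp_def)
  qed
  ultimately show ?thesis by (auto intro: total_rec_ext)
qed

lemma total_rec_binop:
  assumes "total_rec 2 (\<lambda>ys. op (ys ! 0) (ys ! 1))" "total_rec n a" "total_rec n b"
  shows "total_rec n (\<lambda>xs. op (a xs) (b xs))"
proof -
  define G where "G i = (if i = 0 then a else b)" for i :: nat
  have "total_rec n (\<lambda>xs. (\<lambda>ys. op (ys ! 0) (ys ! 1)) (map (\<lambda>i. G i xs) [0..<2]))"
    by (rule total_rec_comp_upt[OF assms(1)]) (auto simp: G_def assms)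
  then show ?thesis by (simp add: G_def upt_conv_Cons)
qed

lemma total_rec_unop:
  assumes "total_rec 1 (\<lambda>ys. f (ys ! 0))" "total_rec n a"
  shows "total_rec n (\<lambda>xs. f (a xs))"
proof -
  have "total_rec n (\<lambda>xs. (\<lambda>ys. f (ys ! 0)) (map (\<lambda>i. a xs) [0..<1]))"
    by (rule total_rec_comp_upt[OF assms(1)]) (use assms(2) in auto)
  then show ?thesis by simp
qed

lemma total_rec_Suc:
  assumes "total_rec n a"
  shows "total_rec n (\<lambda>xs. Suc (a xs))"
proof -
  have "total_rec 1 (\<lambda>ys. Suc (ys ! 0))"
    by (rule total_rec_ext[OF total_rec.succ]) (auto simp: length_Suc_conv)
  from total_rec_unop[OF this assms] show ?thesis .
qed

lemma total_rec_plus_args: "total_rec 2 (\<lambda>ys. ys ! 0 + ys ! 1)"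
proof -
  have rec: "rec_nat y (\<lambda>k r. Suc r) x = x + y" for x y :: nat
    by (induction x) auto
  have "total_rec 2 (\<lambda>xs. rec_nat (xs ! 1) (\<lambda>k r. Suc ((k # r # xs) ! 1)) (xs ! 0))"
    by (intro total_rec_rec_nat total_rec.proj total_rec_Suc) simp_all
  then show ?thesis by (rule total_rec_ext) (simp add: rec add.commute)
qed

lemmas total_rec_plus = total_rec_binop[where op = "(+)", OF total_rec_plus_args]

lemma total_rec_minus_args: "total_rec 2 (\<lambda>ys. ys ! 0 - ys ! 1)"
proof -
  have pred: "total_rec 1 (\<lambda>ys. ys ! 0 - 1)"
  proof -
    have rec: "rec_nat 0 (\<lambda>k r. k) x = x - (1::nat)" for x
      by (cases x) auto
    have "total_rec 1 (\<lambda>xs. rec_nat 0 (\<lambda>k r. (k # r # xs) ! 0) (xs ! 0))"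
      by (intro total_rec_rec_nat total_rec.proj total_rec_const) simp_all
    then show ?thesis by (rule total_rec_ext) (simp add: rec)
  qed
  have rec: "rec_nat a (\<lambda>k r. r - Suc 0) x = a - (x::nat)" for a x
    by (induction x) auto
  have "total_rec 2 (\<lambda>xs. rec_nat (xs ! 0) (\<lambda>k r. (k # r # xs) ! 1 - 1) (xs ! 1))"
    by (intro total_rec_rec_nat total_rec.proj total_rec_unop[OF pred]) simp_all
  then show ?thesis by (rule total_rec_ext) (simp add: rec)
qed

lemma total_rec_times_args: "total_rec 2 (\<lambda>ys. ys ! 0 * ys ! 1)"
proof -
  have rec: "rec_nat 0 (\<lambda>k r. r + y) x = x * (y::nat)" for x y
    by (induction x) auto
  have "total_rec 2 (\<lambda>xs. rec_nat 0 (\<lambda>k r. (k # r # xs) ! 1 + (k # r # xs) ! 3) (xs ! 0))"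
    by (intro total_rec_rec_nat total_rec.proj total_rec_const total_rec_plus) simp_all
  then show ?thesis by (rule total_rec_ext) (simp add: rec)
qed

lemmas total_rec_minus = total_rec_binop[where op = "(-)", OF total_rec_minus_args]
lemmas total_rec_times = total_rec_binop[where op = "(*)", OF total_rec_times_args]

lemma total_rec_skip_second:
  assumes "total_rec (Suc n) f"
  shows "total_rec (Suc (Suc n)) (\<lambda>ys. f (ys ! 0 # drop 2 ys))"
proof -
  define G :: "nat \<Rightarrow> nat list \<Rightarrow> nat"
    where "G i = (if i = 0 then (\<lambda>ys. ys ! 0) else (\<lambda>ys. ys ! (Suc i)))" for i
  have args: "map (\<lambda>i. G i xs) [0..<Suc n] = xs ! 0 # drop 2 xs" if "length xs = Suc (Suc n)" for xs
    using that by (auto simp: list_eq_iff_nth_eq G_def nth_Cons' simp del: upt_Suc)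
  have "total_rec (Suc (Suc n)) (\<lambda>xs. f (map (\<lambda>i. G i xs) [0..<Suc n]))"
    by (rule total_rec_comp_upt[OF assms]) (auto simp: G_def intro: total_rec.proj)
  then show ?thesis by (rule total_rec_ext) (simp add: args del: upt_Suc)
qed

lemma total_rec_sum:
  assumes b: "total_rec n b" and f: "total_rec (Suc n) f"
  shows "total_rec n (\<lambda>xs. \<Sum>k<b xs. f (k # xs))"
proof -
  have rec: "rec_nat 0 (\<lambda>k r. r + g k) x = (\<Sum>k<x. g k :: nat)" for g x
    by (induction x) auto
  have "total_rec n (\<lambda>xs. rec_nat 0
      (\<lambda>k r. (k # r # xs) ! 1 + f ((k # r # xs) ! 0 # drop 2 (k # r # xs))) (b xs))"
    by (intro total_rec_rec_nat b total_rec_const total_rec_plus total_rec.proj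
        total_rec_skip_second f) simp
  then show ?thesis by (rule total_rec_ext) (simp add: rec)
qed

section \<open>A language of total recursive expressions\<close>

text \<open>Expressions in de Bruijn-indexed variables; \<open>Sum\<close> and \<open>Rec\<close> bind one and two new variables
  in their last argument.\<close>

datatype expr = V nat | C nat | Add expr expr | Sub expr expr | Mul expr expr | Sum expr expr
  | Rec expr expr expr | App expr "expr list" | Fn "nat list \<Rightarrow> nat"

fun eval_expr :: "expr \<Rightarrow> nat list \<Rightarrow> nat" where
  "eval_expr (V i) env = env ! i"
| "eval_expr (C c) env = c"
| "eval_expr (Add a b) env = eval_expr a env + eval_expr b env"
| "eval_expr (Sub a b) env = eval_expr a env - eval_expr b env"
| "eval_expr (Mul a b) env = eval_expr a env * eval_expr b env"
| "eval_expr (Sum b f) env = (\<Sum>k<eval_expr b env. eval_expr f (k # env))"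
| "eval_expr (Rec a g h) env =
     rec_nat (eval_expr g env) (\<lambda>k r. eval_expr h (k # r # env)) (eval_expr a env)"
| "eval_expr (App f as) env = eval_expr f (map (\<lambda>a. eval_expr a env) as)"
| "eval_expr (Fn f) env = f env"

fun wf_expr :: "nat \<Rightarrow> expr \<Rightarrow> bool" where
  "wf_expr n (V i) = (i < n)"
| "wf_expr n (C c) = True"
| "wf_expr n (Add a b) = (wf_expr n a \<and> wf_expr n b)"
| "wf_expr n (Sub a b) = (wf_expr n a \<and> wf_expr n b)"
| "wf_expr n (Mul a b) = (wf_expr n a \<and> wf_expr n b)"
| "wf_expr n (Sum b f) = (wf_expr n b \<and> wf_expr (Suc n) f)"
| "wf_expr n (Rec a g h) = (wf_expr n a \<and> wf_expr n g \<and> wf_expr (Suc (Suc n)) h)"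
| "wf_expr n (App f as) = (wf_expr (length as) f \<and> (\<forall>a\<in>set as. wf_expr n a))"
| "wf_expr n (Fn f) = total_rec n f"

theorem total_rec_eval_expr: "wf_expr n e \<Longrightarrow> total_rec n (eval_expr e)"
proof (induction e arbitrary: n)
  case (V i)
  then show ?case by (simp add: total_rec.proj)
next
  case (C c)
  then show ?case by (simp add: total_rec_const)
next
  case (Add a b)
  then show ?case by (simp add: total_rec_plus)
next
  case (Sub a b)
  then show ?case by (simp add: total_rec_minus)
next
  case (Mul a b)
  then show ?case by (simp add: total_rec_times)
next
  case (Sum b f)
  then show ?case by (simp add: total_rec_sum)
next
  case (Rec a g h)
  then show ?case by (simp add: total_rec_rec_nat)
next
  case (App f as)
  then have "total_rec n (\<lambda>xs. eval_expr f (map (\<lambda>g. g xs) (map eval_expr as)))"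
    by (intro total_rec.comp) auto
  then show ?case by (simp add: comp_def)
next
  case (Fn f)
  then show ?case by simp
qed

definition "SgnX a = Sub (C 1) (Sub (C 1) a)"
definition "NotX a = Sub (C 1) a"
definition "EqX a b = NotX (Add (Sub a b) (Sub b a))"
definition "LessX a b = SgnX (Sub b a)"
definition "AndX a b = Mul (SgnX a) (SgnX b)"
definition "OrX a b = SgnX (Add a b)"
definition "ExLessX b f = SgnX (Sum b f)"
definition "AllLessX b f = NotX (Sum b (NotX f))"
definition "IfX c a b = Add (Mul (SgnX c) a) (Mul (NotX c) b)"

lemma eval_SgnX [simp]: "eval_expr (SgnX a) e = (if eval_expr a e = 0 then 0 else 1)"
  by (simp add: SgnX_def)
lemma eval_NotX [simp]: "eval_expr (NotX a) e = (if eval_expr a e = 0 then 1 else 0)"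
  by (simp add: NotX_def)

lemma eval_ExLessX [simp]:
  "eval_expr (ExLessX b f) e = (if \<exists>k<eval_expr b e. eval_expr f (k # e) \<noteq> 0 then 1 else 0)"
  unfolding ExLessX_def eval_SgnX eval_expr.simps by (simp add: sum_eq_0_iff)

lemma eval_AllLessX [simp]:
  "eval_expr (AllLessX b f) e = (if \<forall>k<eval_expr b e. eval_expr f (k # e) \<noteq> 0 then 1 else 0)"
  unfolding AllLessX_def eval_NotX eval_expr.simps by (auto simp: sum_eq_0_iff)

lemma eval_macros [simp]:
  "eval_expr (EqX a b) e = (if eval_expr a e = eval_expr b e then 1 else 0)"
  "eval_expr (LessX a b) e = (if eval_expr a e < eval_expr b e then 1 else 0)"
  "eval_expr (AndX a b) e = (if eval_expr a e \<noteq> 0 \<and> eval_expr b e \<noteq> 0 then 1 else 0)"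
  "eval_expr (OrX a b) e = (if eval_expr a e \<noteq> 0 \<or> eval_expr b e \<noteq> 0 then 1 else 0)"
  "eval_expr (IfX c a b) e = (if eval_expr c e \<noteq> 0 then eval_expr a e else eval_expr b e)"
  by (auto simp: EqX_def LessX_def AndX_def OrX_def IfX_def)

lemma wf_macros [simp]:
  "wf_expr n (SgnX a) = wf_expr n a"
  "wf_expr n (NotX a) = wf_expr n a"
  "wf_expr n (EqX a b) = (wf_expr n a \<and> wf_expr n b)"
  "wf_expr n (LessX a b) = (wf_expr n a \<and> wf_expr n b)"
  "wf_expr n (AndX a b) = (wf_expr n a \<and> wf_expr n b)"
  "wf_expr n (OrX a b) = (wf_expr n a \<and> wf_expr n b)"
  "wf_expr n (ExLessX b f) = (wf_expr n b \<and> wf_expr (Suc n) f)"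
  "wf_expr n (AllLessX b f) = (wf_expr n b \<and> wf_expr (Suc n) f)"
  "wf_expr n (IfX c a b) = (wf_expr n c \<and> wf_expr n a \<and> wf_expr n b)"
  by (auto simp: SgnX_def NotX_def EqX_def LessX_def AndX_def OrX_def ExLessX_def AllLessX_def
      IfX_def)

section \<open>Coding pairs and lists\<close>

definition "TriangleX = Sum (Add (V 0) (C 1)) (V 0)"
lemma eval_TriangleX [simp]: "eval_expr TriangleX [s] = triangle s"
  by (induction s) (auto simp: TriangleX_def)
lemma wf_TriangleX [simp]: "wf_expr (Suc 0) TriangleX" by (simp add: TriangleX_def)

definition "PairX = Add (App TriangleX [Add (V 0) (V 1)]) (V 0)"
lemma eval_PairX [simp]: "eval_expr PairX [m, n] = prod_encode (m, n)"
  by (simp add: PairX_def prod_encode_def)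
lemma wf_PairX [simp]: "wf_expr (Suc (Suc 0)) PairX" by (simp add: PairX_def)

definition pair_fst :: "nat \<Rightarrow> nat" where
  "pair_fst z = fst (prod_decode z)"

definition pair_snd :: "nat \<Rightarrow> nat" where
  "pair_snd z = snd (prod_decode z)"

lemma pair_fst_prod_encode [simp]: "pair_fst (prod_encode (a, b)) = a"
  and pair_snd_prod_encode [simp]: "pair_snd (prod_encode (a, b)) = b"
  by (simp_all add: pair_fst_def pair_snd_def)

lemma prod_encode_pair_fst_snd [simp]: "prod_encode (pair_fst c, pair_snd c) = c"
  by (simp add: pair_fst_def pair_snd_def)

lemma pair_fst_0 [simp]: "pair_fst 0 = 0" and pair_snd_0 [simp]: "pair_snd 0 = 0"
  using pair_fst_prod_encode[of 0 0] pair_snd_prod_encode[of 0 0] by (simp_all add: prod_encode_def)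

lemma ex_pair_iff: "(\<exists>k. P k \<and> (\<exists>y. Q k y)) \<longleftrightarrow> (\<exists>w. P (pair_fst w) \<and> Q (pair_fst w) (pair_snd w))"
  by (metis pair_fst_prod_encode pair_snd_prod_encode)

text \<open>Both components of \<open>z = prod_encode (a, b)\<close> are at most \<open>z\<close>, so each is found by a bounded
  search: \<open>PairFstX\<close> computes \<open>\<Sum>k\<le>z. k \<cdot> [\<exists>n\<le>z. prod_encode (k, n) = z]\<close>.\<close>

definition "PairFstX =
  Sum (Add (V 0) (C 1)) (Mul (V 0) (ExLessX (Add (V 1) (C 1)) (EqX (App PairX [V 1, V 0]) (V 2))))"
definition "PairSndX =
  Sum (Add (V 0) (C 1)) (Mul (V 0) (ExLessX (Add (V 1) (C 1)) (EqX (App PairX [V 0, V 1]) (V 2))))"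

lemma prod_decode_le: "prod_decode z = (a, b) \<Longrightarrow> a \<le> z \<and> b \<le> z"
  by (metis le_prod_encode_1 le_prod_encode_2 prod_decode_inverse)

lemma sum_select_unique:
  assumes "a < m" "\<And>k. k < m \<Longrightarrow> P k \<longleftrightarrow> k = a"
  shows "(\<Sum>k<m. k * (if P k then 1 else 0)) = (a::nat)"
proof -
  have "(\<Sum>k<m. k * (if P k then 1 else 0)) = (\<Sum>k<m. if k = a then k else 0)"
    using assms(2) by (intro sum.cong) auto
  also have "\<dots> = a" using assms(1) by simp
  finally show ?thesis .
qed

lemma eval_PairFstX [simp]: "eval_expr PairFstX [z] = pair_fst z"
proof -
  obtain a b where ab: "prod_decode z = (a, b)" by (cases "prod_decode z")
  then have "z = prod_encode (a, b)" "a \<le> z" "b \<le> z"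
    using prod_decode_le[OF ab] by (metis prod_decode_inverse)+
  then have select: "(\<exists>n<z + 1. (if prod_encode (k, n) = z then 1 else (0::nat)) \<noteq> 0) \<longleftrightarrow> k = a" for k
    by (auto simp: less_Suc_eq_le)
  have "eval_expr PairFstX [z]
      = (\<Sum>k<z + 1. k *
          (if \<exists>n<z + 1. (if prod_encode (k, n) = z then 1 else (0::nat)) \<noteq> 0 then 1 else 0))"
    by (simp only: PairFstX_def eval_expr.simps eval_ExLessX eval_macros eval_PairX nth_Cons_0
        nth_Cons_Suc list.map One_nat_def numeral_2_eq_2)
  also have "\<dots> = a"
    using \<open>a \<le> z\<close> by (intro sum_select_unique[OF _ select]) simp
  finally show ?thesis by (simp add: pair_fst_def ab)
qed

lemma eval_PairSndX [simp]: "eval_expr PairSndX [z] = pair_snd z"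
proof -
  obtain a b where ab: "prod_decode z = (a, b)" by (cases "prod_decode z")
  then have "z = prod_encode (a, b)" "a \<le> z" "b \<le> z"
    using prod_decode_le[OF ab] by (metis prod_decode_inverse)+
  then have select: "(\<exists>n<z + 1. (if prod_encode (n, k) = z then 1 else (0::nat)) \<noteq> 0) \<longleftrightarrow> k = b" for k
    by (auto simp: less_Suc_eq_le)
  have "eval_expr PairSndX [z]
      = (\<Sum>k<z + 1. k *
          (if \<exists>n<z + 1. (if prod_encode (n, k) = z then 1 else (0::nat)) \<noteq> 0 then 1 else 0))"
    by (simp only: PairSndX_def eval_expr.simps eval_ExLessX eval_macros eval_PairX nth_Cons_0
        nth_Cons_Suc list.map One_nat_def numeral_2_eq_2)
  also have "\<dots> = b"
    using \<open>b \<le> z\<close> by (intro sum_select_unique[OF _ select]) simp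
  finally show ?thesis by (simp add: pair_snd_def ab)
qed

lemma wf_PairFstX [simp]: "wf_expr (Suc 0) PairFstX" "wf_expr (Suc 0) PairSndX"
  by (simp_all add: PairFstX_def PairSndX_def)

lemma list_decode_eq_Nil [simp]: "list_decode c = [] \<longleftrightarrow> c = 0"
proof (cases c)
  case (Suc n)
  then show ?thesis by (cases "prod_decode n") simp
qed simp

lemma length_list_decode_le: "length (list_decode c) \<le> c"
proof (induction c rule: list_decode.induct)
  case 1
  then show ?case by simp
next
  case (2 n)
  obtain x y where xy: "prod_decode n = (x, y)" by (cases "prod_decode n")
  then have "y \<le> n" using prod_decode_le by blast
  with 2 xy show ?case by simp
qed

definition code_tl :: "nat \<Rightarrow> nat" where
  "code_tl c = list_encode (tl (list_decode c))"

definition code_drop :: "nat \<Rightarrow> nat \<Rightarrow> nat" where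
  "code_drop i c = (code_tl ^^ i) c"

definition code_nth :: "nat \<Rightarrow> nat \<Rightarrow> nat" where
  "code_nth c i = nth_default 0 (list_decode c) i"

definition code_length :: "nat \<Rightarrow> nat" where
  "code_length c = length (list_decode c)"

definition code_Cons :: "nat \<Rightarrow> nat \<Rightarrow> nat" where
  "code_Cons x c = list_encode (x # list_decode c)"

lemma code_tl_eq_pair_snd: "code_tl c = pair_snd (c - 1)"
proof (cases c)
  case 0
  then show ?thesis by (simp add: code_tl_def)
next
  case (Suc n)
  obtain x y where xy: "prod_decode n = (x, y)" by (cases "prod_decode n")
  then show ?thesis using Suc by (simp add: code_tl_def pair_snd_def)
qed

lemma list_decode_code_drop: "list_decode (code_drop i c) = drop i (list_decode c)"
  by (induction i) (simp_all add: code_drop_def code_tl_def drop_Suc tl_drop)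

lemma code_nth_eq_pair_fst: "code_nth c i = pair_fst (code_drop i c - 1)"
proof (cases "code_drop i c")
  case 0
  then have "list_decode (code_drop i c) = []" by simp
  then have "\<not> i < length (list_decode c)" by (simp add: list_decode_code_drop)
  then show ?thesis using 0 by (simp add: code_nth_def nth_default_def)
next
  case (Suc n)
  obtain x y where xy: "prod_decode n = (x, y)" by (cases "prod_decode n")
  have drop: "drop i (list_decode c) = x # list_decode y"
    using list_decode_code_drop[of i c] Suc xy by simp
  then have i: "i < length (list_decode c)"
    by (metis drop_eq_Nil list.distinct(1) not_le)
  have "list_decode c ! i = x"
    using hd_drop_conv_nth[OF i] drop by simp
  with i show ?thesis using Suc xy by (simp add: code_nth_def nth_default_def pair_fst_def)
qed

lemma code_drop_neq_0_iff: "code_drop i c \<noteq> 0 \<longleftrightarrow> i < code_length c"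
  using list_decode_code_drop[of i c] list_decode_eq_Nil[of "code_drop i c"]
  by (auto simp: code_length_def)

lemma code_Cons_eq_Suc_prod_encode: "code_Cons x c = Suc (prod_encode (x, c))"
  by (simp add: code_Cons_def)

definition "CodeTlX = App PairSndX [Sub (V 0) (C 1)]"
lemma eval_CodeTlX [simp]: "eval_expr CodeTlX [c] = code_tl c"
  by (simp add: CodeTlX_def code_tl_eq_pair_snd)
lemma wf_CodeTlX [simp]: "wf_expr (Suc 0) CodeTlX" by (simp add: CodeTlX_def)

definition "CodeDropX = Rec (V 0) (V 1) (App CodeTlX [V 1])"
lemma eval_CodeDropX [simp]: "eval_expr CodeDropX [i, c] = code_drop i c"
proof -
  have "rec_nat c (\<lambda>k r. code_tl r) i = (code_tl ^^ i) c" by (induction i) auto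
  then show ?thesis by (simp add: CodeDropX_def code_drop_def)
qed
lemma wf_CodeDropX [simp]: "wf_expr (Suc (Suc 0)) CodeDropX" by (simp add: CodeDropX_def)

definition "CodeNthX = App PairFstX [Sub (App CodeDropX [V 1, V 0]) (C 1)]"
lemma eval_CodeNthX [simp]: "eval_expr CodeNthX [c, i] = code_nth c i"
  by (simp add: CodeNthX_def code_nth_eq_pair_fst)
lemma wf_CodeNthX [simp]: "wf_expr (Suc (Suc 0)) CodeNthX" by (simp add: CodeNthX_def)

definition "CodeLengthX = Sum (V 0) (SgnX (App CodeDropX [V 0, V 1]))"
lemma eval_CodeLengthX [simp]: "eval_expr CodeLengthX [c] = code_length c"
proof -
  have "eval_expr CodeLengthX [c] = (\<Sum>i<c. if code_drop i c = 0 then 0 else 1)"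
    by (simp add: CodeLengthX_def)
  also have "\<dots> = (\<Sum>i<c. if i < code_length c then 1 else 0)"
    by (rule sum.cong) (auto simp: code_drop_neq_0_iff[symmetric])
  also have "\<dots> = card ({..<c} \<inter> {i. i < code_length c})"
    by (simp add: sum.If_cases)
  also have "{..<c} \<inter> {i. i < code_length c} = {..<code_length c}"
    using length_list_decode_le[of c] by (auto simp: code_length_def)
  finally show ?thesis by simp
qed
lemma wf_CodeLengthX [simp]: "wf_expr (Suc 0) CodeLengthX" by (simp add: CodeLengthX_def)

definition "CodeConsX = Add (App PairX [V 0, V 1]) (C 1)"
lemma eval_CodeConsX [simp]: "eval_expr CodeConsX [x, c] = code_Cons x c"
  by (simp add: CodeConsX_def code_Cons_eq_Suc_prod_encode)
lemma wf_CodeConsX [simp]: "wf_expr (Suc (Suc 0)) CodeConsX" by (simp add: CodeConsX_def)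

lemma code_nth_list_encode [simp]: "code_nth (list_encode L) i = nth_default 0 L i"
  by (simp add: code_nth_def)
lemma code_length_list_encode [simp]: "code_length (list_encode L) = length L"
  by (simp add: code_length_def)
lemma code_Cons_list_encode [simp]: "code_Cons x (list_encode L) = list_encode (x # L)"
  by (simp add: code_Cons_def)
lemma code_tl_list_encode [simp]: "code_tl (list_encode L) = list_encode (tl L)"
  by (simp add: code_tl_def)

lemma list_encode_Cons_neq_0 [simp]: "list_encode (a # L) \<noteq> 0"
  by simp

declare list_encode.simps(2) [simp del]

section \<open>Kleene's normal form\<close>

text \<open>Programs are coded lists \<open>[opcode, \<dots>]\<close> mirroring the rules of \<^const>\<open>total_rec\<close>:
  \<open>[0]\<close> zero, \<open>[1]\<close> successor, \<open>[2, i]\<close> projection, \<open>[3, f, [g\<^sub>0, \<dots>]]\<close> composition,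
  \<open>[4, g, h]\<close> primitive recursion on the first argument, \<open>[5, f]\<close> minimisation; inputs are
  coded lists. The rule \<open>ext\<close> needs no code since \<open>implements\<close> below is extensional.\<close>

inductive computes :: "nat \<Rightarrow> nat \<Rightarrow> nat \<Rightarrow> bool" where
  computes_zero: "code_nth p 0 = 0 \<Longrightarrow> computes p x 0"
| computes_succ: "code_nth p 0 = 1 \<Longrightarrow> computes p x (Suc (code_nth x 0))"
| computes_proj: "code_nth p 0 = 2 \<Longrightarrow> computes p x (code_nth x (code_nth p 1))"
| computes_comp: "code_nth p 0 = 3 \<Longrightarrow> code_length w = code_length (code_nth p 2) \<Longrightarrow>
    \<forall>i<code_length w. computes (code_nth (code_nth p 2) i) x (code_nth w i) \<Longrightarrow>
    computes (code_nth p 1) w v \<Longrightarrow> computes p x v"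
| computes_prim_0: "code_nth p 0 = 4 \<Longrightarrow> x \<noteq> 0 \<Longrightarrow> code_nth x 0 = 0 \<Longrightarrow>
    computes (code_nth p 1) (code_tl x) v \<Longrightarrow> computes p x v"
| computes_prim_Suc: "code_nth p 0 = 4 \<Longrightarrow> x \<noteq> 0 \<Longrightarrow> code_nth x 0 = Suc a \<Longrightarrow>
    computes p (code_Cons a (code_tl x)) r \<Longrightarrow>
    computes (code_nth p 2) (code_Cons a (code_Cons r (code_tl x))) v \<Longrightarrow> computes p x v"
| computes_mu: "code_nth p 0 = 5 \<Longrightarrow> computes (code_nth p 1) (code_Cons v x) 0 \<Longrightarrow>
    \<forall>y<v. \<exists>w. w \<noteq> 0 \<and> computes (code_nth p 1) (code_Cons y x) w \<Longrightarrow> computes p x v"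

definition implements :: "nat \<Rightarrow> (nat list \<Rightarrow> nat) \<Rightarrow> nat \<Rightarrow> bool" where
  "implements n f p \<longleftrightarrow>
     (\<forall>xs. length xs = n \<longrightarrow> (\<forall>v. computes p (list_encode xs) v \<longleftrightarrow> v = f xs))"

lemma implements_zero: "implements n (\<lambda>_. 0) (list_encode [0])"
proof -
  have "computes (list_encode [0]) x v \<longleftrightarrow> v = 0" for x v
  proof
    assume "computes (list_encode [0]) x v"
    then show "v = 0"
      by (cases rule: computes.cases) (auto simp: nth_default_def)
  qed (auto intro: computes_zero simp: nth_default_def)
  then show ?thesis by (simp add: implements_def)
qed

lemma implements_succ: "implements 1 (\<lambda>xs. Suc (hd xs)) (list_encode [1])"
proof -
  have "computes (list_encode [1]) (list_encode [a]) v \<longleftrightarrow> v = Suc a" for a v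
  proof
    assume "computes (list_encode [1]) (list_encode [a]) v"
    then show "v = Suc a"
      by (cases rule: computes.cases) (auto simp: nth_default_def)
  next
    assume "v = Suc a"
    then show "computes (list_encode [1]) (list_encode [a]) v"
      using computes_succ[of "list_encode [1]" "list_encode [a]"] by (simp add: nth_default_def)
  qed
  then show ?thesis by (auto simp: implements_def length_Suc_conv)
qed

lemma implements_proj: "i < n \<Longrightarrow> implements n (\<lambda>xs. xs ! i) (list_encode [2, i])"
proof -
  assume i: "i < n"
  have "computes (list_encode [2, i]) x v \<longleftrightarrow> v = code_nth x i" for x v
  proof
    assume "computes (list_encode [2, i]) x v"
    then show "v = code_nth x i"
      by (cases rule: computes.cases) (auto simp: nth_default_def)
  next
    assume "v = code_nth x i"
    then show "computes (list_encode [2, i]) x v"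
      using computes_proj[of "list_encode [2, i]" x] by (simp add: nth_default_def)
  qed
  then show ?thesis using i by (simp add: implements_def nth_default_def)
qed

lemma implements_ext:
  "implements n f p \<Longrightarrow> \<forall>xs. length xs = n \<longrightarrow> g xs = f xs \<Longrightarrow> implements n g p"
  by (simp add: implements_def)

lemma implements_comp:
  assumes f: "implements m f qf" and len: "length gs = m"
    and gs: "\<forall>i<m. implements n (gs ! i) (qs ! i)" and lenp: "length qs = m"
  shows "implements n (\<lambda>xs. f (map (\<lambda>g. g xs) gs)) (list_encode [3, qf, list_encode qs])"
  unfolding implements_def
proof (intro allI impI)
  fix xs :: "nat list" and v assume xs: "length xs = n"
  let ?p = "list_encode [3, qf, list_encode qs]"
  show "computes ?p (list_encode xs) v \<longleftrightarrow> v = f (map (\<lambda>g. g xs) gs)"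
  proof
    assume "computes ?p (list_encode xs) v"
    then show "v = f (map (\<lambda>g. g xs) gs)"
    proof (cases rule: computes.cases)
      case (computes_comp w)
      define ws where "ws = list_decode w"
      have w: "w = list_encode ws" by (simp add: ws_def)
      have lw: "length ws = m" using computes_comp(2) lenp by (simp add: w nth_default_def)
      have "ws ! i = (gs ! i) xs" if "i < m" for i
      proof -
        have "computes (qs ! i) (list_encode xs) (ws ! i)"
          using computes_comp(3) that lw lenp by (simp add: w nth_default_def)
        then show ?thesis using gs that xs by (simp add: implements_def)
      qed
      then have "ws = map (\<lambda>g. g xs) gs" using lw len by (simp add: list_eq_iff_nth_eq)
      moreover have "computes qf (list_encode ws) v"
        using computes_comp(4) by (simp add: w nth_default_def)
      ultimately show ?thesis using f lw by (simp add: implements_def)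
    qed (auto simp: nth_default_def)
  next
    assume v: "v = f (map (\<lambda>g. g xs) gs)"
    let ?ws = "map (\<lambda>g. g xs) gs"
    have "computes ?p (list_encode xs) v"
    proof (rule computes_comp[where w = "list_encode ?ws"])
      show "code_length (list_encode ?ws) = code_length (code_nth ?p 2)"
        using len lenp by (simp add: nth_default_def)
      show "\<forall>i<code_length (list_encode ?ws).
          computes (code_nth (code_nth ?p 2) i) (list_encode xs) (code_nth (list_encode ?ws) i)"
        using gs xs len lenp by (auto simp: nth_default_def implements_def)
      show "computes (code_nth ?p 1) (list_encode ?ws) v"
        using f v len by (simp add: nth_default_def implements_def)
    qed (simp add: nth_default_def)
    then show "computes ?p (list_encode xs) v" .
  qed
qed

lemma computes_prim_iff:
  assumes g: "implements n g qg" and h: "implements (n + 2) h qh" and rest: "length rest = n"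
  shows "computes (list_encode [4, qg, qh]) (list_encode (a # rest)) v
    \<longleftrightarrow> v = rec_nat (g rest) (\<lambda>k r. h (k # r # rest)) a"
  (is "computes ?p _ _ \<longleftrightarrow> _")
proof (induction a arbitrary: v)
  case 0
  show ?case
  proof
    assume "computes ?p (list_encode (0 # rest)) v"
    then show "v = rec_nat (g rest) (\<lambda>k r. h (k # r # rest)) 0"
    proof (cases rule: computes.cases)
      case computes_prim_0
      then show ?thesis using g rest by (simp add: nth_default_def implements_def)
    qed (auto simp: nth_default_def)
  next
    assume v: "v = rec_nat (g rest) (\<lambda>k r. h (k # r # rest)) 0"
    show "computes ?p (list_encode (0 # rest)) v"
      by (rule computes_prim_0) (use v g rest in \<open>auto simp: nth_default_def implements_def\<close>)
  qed
next
  case (Suc a)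
  let ?r = "rec_nat (g rest) (\<lambda>k r. h (k # r # rest)) a"
  show ?case
  proof
    assume "computes ?p (list_encode (Suc a # rest)) v"
    then show "v = rec_nat (g rest) (\<lambda>k r. h (k # r # rest)) (Suc a)"
    proof (cases rule: computes.cases)
      case (computes_prim_Suc a' r)
      then have "a' = a" by (simp add: nth_default_def)
      moreover have "r = ?r" using computes_prim_Suc(4) Suc \<open>a' = a\<close> by (simp add: nth_default_def)
      ultimately show ?thesis
        using computes_prim_Suc(5) h rest by (simp add: nth_default_def implements_def)
    qed (auto simp: nth_default_def)
  next
    assume v: "v = rec_nat (g rest) (\<lambda>k r. h (k # r # rest)) (Suc a)"
    show "computes ?p (list_encode (Suc a # rest)) v"
    proof (rule computes_prim_Suc[where a = a and r = ?r])
      show "computes ?p (code_Cons a (code_tl (list_encode (Suc a # rest)))) ?r"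
        using Suc by simp
      show "computes (code_nth ?p 2) (code_Cons a (code_Cons ?r (code_tl (list_encode (Suc a # rest)))))
          v"
        using h rest v by (simp add: nth_default_def implements_def)
    qed (auto simp: nth_default_def)
  qed
qed

lemma implements_prim:
  assumes "implements n g qg" "implements (n + 2) h qh"
  shows "implements (Suc n) (\<lambda>xs. rec_nat (g (tl xs)) (\<lambda>k r. h (k # r # tl xs)) (hd xs))
    (list_encode [4, qg, qh])"
  unfolding implements_def
proof (intro allI impI)
  fix xs :: "nat list" and v
  assume "length xs = Suc n"
  then obtain a rest where "xs = a # rest" "length rest = n" by (cases xs) auto
  with computes_prim_iff[OF assms] show "computes (list_encode [4, qg, qh]) (list_encode xs) v
    \<longleftrightarrow> v = rec_nat (g (tl xs)) (\<lambda>k r. h (k # r # tl xs)) (hd xs)"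
    by simp
qed

lemma implements_mu:
  assumes f: "implements (Suc n) f qf"
    and exists_zero: "\<forall>xs. length xs = n \<longrightarrow> (\<exists>y. f (y # xs) = 0)"
  shows "implements n (\<lambda>xs. LEAST y. f (y # xs) = 0) (list_encode [5, qf])"
  unfolding implements_def
proof (intro allI impI)
  fix xs :: "nat list" and v assume xs: "length xs = n"
  let ?p = "list_encode [5, qf]"
  have computes_iff: "computes qf (list_encode (y # xs)) w \<longleftrightarrow> w = f (y # xs)" for y w
    using f xs by (simp add: implements_def)
  have "computes ?p (list_encode xs) v \<longleftrightarrow> f (v # xs) = 0 \<and> (\<forall>y<v. f (y # xs) \<noteq> 0)"
  proof
    assume "computes ?p (list_encode xs) v"
    then show "f (v # xs) = 0 \<and> (\<forall>y<v. f (y # xs) \<noteq> 0)"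
    proof (cases rule: computes.cases)
      case computes_mu
      then show ?thesis using computes_iff by (fastforce simp: nth_default_def)
    qed (auto simp: nth_default_def)
  next
    assume a: "f (v # xs) = 0 \<and> (\<forall>y<v. f (y # xs) \<noteq> 0)"
    show "computes ?p (list_encode xs) v"
      by (rule computes_mu) (use a in \<open>auto simp: nth_default_def computes_iff\<close>)
  qed
  also have "\<dots> \<longleftrightarrow> v = (LEAST y. f (y # xs) = 0)"
  proof
    assume "f (v # xs) = 0 \<and> (\<forall>y<v. f (y # xs) \<noteq> 0)"
    then show "v = (LEAST y. f (y # xs) = 0)"
      by (intro Least_equality[symmetric]) (auto simp: not_less[symmetric])
  next
    assume v: "v = (LEAST y. f (y # xs) = 0)"
    obtain y where "f (y # xs) = 0" using exists_zero xs by blast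
    then show "f (v # xs) = 0 \<and> (\<forall>y<v. f (y # xs) \<noteq> 0)"
      unfolding v by (auto intro: LeastI dest: not_less_Least)
  qed
  finally show "computes ?p (list_encode xs) v \<longleftrightarrow> v = (LEAST y. f (y # xs) = 0)" .
qed

theorem total_rec_implemented: "total_rec n f \<Longrightarrow> \<exists>p. implements n f p"
proof (induction rule: total_rec.induct)
  case (zero n)
  then show ?case using implements_zero by blast
next
  case succ
  then show ?case using implements_succ by blast
next
  case (proj i n)
  then show ?case using implements_proj by blast
next
  case (comp m f gs n)
  then obtain qf where qf: "implements m f qf" by blast
  have "\<forall>i<m. \<exists>p. implements n (gs ! i) p" using comp by (auto simp: nth_mem)
  then obtain P where P: "\<forall>i<m. implements n (gs ! i) (P i)" by metis
  have "implements n (\<lambda>xs. f (map (\<lambda>g. g xs) gs))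
      (list_encode [3, qf, list_encode (map P [0..<m])])"
    by (rule implements_comp[OF qf]) (use comp P in auto)
  then show ?case by blast
next
  case (prim n g h)
  then show ?case using implements_prim by blast
next
  case (mu n f)
  then show ?case using implements_mu by blast
next
  case (ext n f g)
  then show ?case using implements_ext by blast
qed

text \<open>A computation trace is a list of entries \<open>[p, x, v, a]\<close>, each asserting \<open>computes p x v\<close> and
  justified by one rule of \<^const>\<open>computes\<close> whose premises are recorded at earlier entries;
  \<open>a\<close> is the intermediate value of the \<open>comp\<close> and \<open>prim\<close> rules. The existence of a trace is a
  \<open>\<Sigma>\<^sub>1\<close> statement with a decidable matrix.\<close>

definition entry_is :: "(nat \<Rightarrow> nat) \<Rightarrow> nat \<Rightarrow> nat \<Rightarrow> nat \<Rightarrow> nat \<Rightarrow> bool" where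
  "entry_is E j p x v \<longleftrightarrow> code_nth (E j) 0 = p \<and> code_nth (E j) 1 = x \<and> code_nth (E j) 2 = v"

definition recorded_before :: "(nat \<Rightarrow> nat) \<Rightarrow> nat \<Rightarrow> nat \<Rightarrow> nat \<Rightarrow> nat \<Rightarrow> bool" where
  "recorded_before E k p x v \<longleftrightarrow> (\<exists>j<k. entry_is E j p x v)"

definition recorded_nonzero_before :: "(nat \<Rightarrow> nat) \<Rightarrow> nat \<Rightarrow> nat \<Rightarrow> nat \<Rightarrow> bool" where
  "recorded_nonzero_before E k p x \<longleftrightarrow>
     (\<exists>j<k. code_nth (E j) 0 = p \<and> code_nth (E j) 1 = x \<and> code_nth (E j) 2 \<noteq> 0)"

definition justified :: "(nat \<Rightarrow> nat) \<Rightarrow> nat \<Rightarrow> nat \<Rightarrow> nat \<Rightarrow> nat \<Rightarrow> nat \<Rightarrow> bool" where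
  "justified E k p x v a \<longleftrightarrow>
    (code_nth p 0 = 0 \<and> v = 0) \<or>
    (code_nth p 0 = 1 \<and> v = Suc (code_nth x 0)) \<or>
    (code_nth p 0 = 2 \<and> v = code_nth x (code_nth p 1)) \<or>
    (code_nth p 0 = 3 \<and> code_length a = code_length (code_nth p 2) \<and>
       (\<forall>i<code_length a. recorded_before E k (code_nth (code_nth p 2) i) x (code_nth a i)) \<and>
       recorded_before E k (code_nth p 1) a v) \<or>
    (code_nth p 0 = 4 \<and> x \<noteq> 0 \<and> code_nth x 0 = 0 \<and>
       recorded_before E k (code_nth p 1) (code_tl x) v) \<or>
    (code_nth p 0 = 4 \<and> x \<noteq> 0 \<and> code_nth x 0 \<noteq> 0 \<and>
       recorded_before E k p (code_Cons (code_nth x 0 - 1) (code_tl x)) a \<and>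
       recorded_before E k (code_nth p 2)
         (code_Cons (code_nth x 0 - 1) (code_Cons a (code_tl x))) v) \<or>
    (code_nth p 0 = 5 \<and> recorded_before E k (code_nth p 1) (code_Cons v x) 0 \<and>
       (\<forall>y<v. recorded_nonzero_before E k (code_nth p 1) (code_Cons y x)))"

definition justified_entry :: "(nat \<Rightarrow> nat) \<Rightarrow> nat \<Rightarrow> bool" where
  "justified_entry E k \<longleftrightarrow>
     justified E k (code_nth (E k) 0) (code_nth (E k) 1) (code_nth (E k) 2) (code_nth (E k) 3)"

definition valid_trace_code :: "nat \<Rightarrow> bool" where
  "valid_trace_code s \<longleftrightarrow> (\<forall>k<code_length s. justified_entry (code_nth s) k)"

definition embeds :: "(nat \<Rightarrow> nat) \<Rightarrow> nat \<Rightarrow> (nat \<Rightarrow> nat) \<Rightarrow> nat \<Rightarrow> bool" where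
  "embeds E k E' k' \<longleftrightarrow> (\<forall>j<k. \<exists>j'<k'. E' j' = E j)"

lemma recorded_before_mono:
  "recorded_before E k p x v \<Longrightarrow> embeds E k E' k' \<Longrightarrow> recorded_before E' k' p x v"
  unfolding recorded_before_def entry_is_def embeds_def by metis

lemma recorded_nonzero_before_mono:
  "recorded_nonzero_before E k p x \<Longrightarrow> embeds E k E' k' \<Longrightarrow> recorded_nonzero_before E' k' p x"
  unfolding recorded_nonzero_before_def embeds_def by metis

lemma recorded_nonzero_beforeD:
  "recorded_nonzero_before E k p x \<Longrightarrow> \<exists>w. w \<noteq> 0 \<and> recorded_before E k p x w"
  unfolding recorded_nonzero_before_def recorded_before_def entry_is_def by blast

lemma recorded_nonzero_beforeI:
  "recorded_before E k p x w \<Longrightarrow> w \<noteq> 0 \<Longrightarrow> recorded_nonzero_before E k p x"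
  unfolding recorded_nonzero_before_def recorded_before_def entry_is_def by auto

lemma justified_mono:
  assumes "justified E k p x v a" "embeds E k E' k'"
  shows "justified E' k' p x v a"
  using assms(1) recorded_before_mono[OF _ assms(2)] recorded_nonzero_before_mono[OF _ assms(2)]
  unfolding justified_def by blast

lemma justified_entry_mono:
  "justified_entry E k \<Longrightarrow> E' k' = E k \<Longrightarrow> embeds E k E' k' \<Longrightarrow> justified_entry E' k'"
  unfolding justified_entry_def using justified_mono by metis

lemma justified_computes:
  assumes "justified E k p x v a"
    and earlier: "\<And>p x v. recorded_before E k p x v \<Longrightarrow> computes p x v"
  shows "computes p x v"
  using assms(1) unfolding justified_def
proof (elim disjE conjE)
  assume c: "code_nth p 0 = 3" "code_length a = code_length (code_nth p 2)"
    "\<forall>i<code_length a. recorded_before E k (code_nth (code_nth p 2) i) x (code_nth a i)"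
    "recorded_before E k (code_nth p 1) a v"
  show ?thesis by (rule computes_comp[where w = a]) (use c in \<open>simp_all add: earlier\<close>)
next
  assume c: "code_nth p 0 = 4" "x \<noteq> 0" "code_nth x 0 = 0"
    "recorded_before E k (code_nth p 1) (code_tl x) v"
  show ?thesis by (rule computes_prim_0) (use c in \<open>simp_all add: earlier\<close>)
next
  assume c: "code_nth p 0 = 4" "x \<noteq> 0" "code_nth x 0 \<noteq> 0"
    "recorded_before E k p (code_Cons (code_nth x 0 - 1) (code_tl x)) a"
    "recorded_before E k (code_nth p 2) (code_Cons (code_nth x 0 - 1) (code_Cons a (code_tl x))) v"
  show ?thesis
    by (rule computes_prim_Suc[where a = "code_nth x 0 - 1" and r = a])
      (use c in \<open>simp_all add: earlier\<close>)
next
  assume c: "code_nth p 0 = 5" "recorded_before E k (code_nth p 1) (code_Cons v x) 0"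
    "\<forall>y<v. recorded_nonzero_before E k (code_nth p 1) (code_Cons y x)"
  show ?thesis
    by (rule computes_mu) (use c in \<open>auto dest!: recorded_nonzero_beforeD intro: earlier\<close>)
qed (auto intro: computes_zero computes_succ computes_proj[unfolded One_nat_def])

lemma valid_trace_code_sound:
  "valid_trace_code s \<Longrightarrow> k < code_length s
    \<Longrightarrow> computes (code_nth (code_nth s k) 0) (code_nth (code_nth s k) 1) (code_nth (code_nth s k) 2)"
proof (induction k rule: less_induct)
  case (less k)
  show ?case
  proof (rule justified_computes)
    show "justified (code_nth s) k (code_nth (code_nth s k) 0) (code_nth (code_nth s k) 1)
      (code_nth (code_nth s k) 2) (code_nth (code_nth s k) 3)"
      using less.prems by (simp add: valid_trace_code_def justified_entry_def)
    show "computes p x v" if "recorded_before (code_nth s) k p x v" for p x v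
      using that less unfolding recorded_before_def entry_is_def by force
  qed
qed

definition valid_trace :: "nat list \<Rightarrow> bool" where
  "valid_trace L \<longleftrightarrow> (\<forall>k<length L. justified_entry (nth_default 0 L) k)"

definition in_trace :: "nat list \<Rightarrow> nat \<Rightarrow> nat \<Rightarrow> nat \<Rightarrow> bool" where
  "in_trace L p x v \<longleftrightarrow> recorded_before (nth_default 0 L) (length L) p x v"

lemma valid_trace_code_list_encode: "valid_trace_code (list_encode L) \<longleftrightarrow> valid_trace L"
proof -
  have "code_nth (list_encode L) = nth_default 0 L" by (rule HOL.ext) simp
  then show ?thesis by (simp add: valid_trace_code_def valid_trace_def)
qed

lemma embeds_append_left:
  assumes "k \<le> length L1" "k \<le> k'"
  shows "embeds (nth_default 0 L1) k (nth_default 0 (L1 @ L2)) k'"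
  unfolding embeds_def
proof (intro allI impI)
  fix j assume "j < k"
  then show "\<exists>j'<k'. nth_default 0 (L1 @ L2) j' = nth_default 0 L1 j"
    using assms by (intro exI[of _ j]) (simp add: nth_default_append nth_default_nth)
qed

lemma embeds_append_right:
  assumes "length L1 + k \<le> k'"
  shows "embeds (nth_default 0 L2) k (nth_default 0 (L1 @ L2)) k'"
  unfolding embeds_def
proof (intro allI impI)
  fix j assume "j < k"
  then show "\<exists>j'<k'. nth_default 0 (L1 @ L2) j' = nth_default 0 L2 j"
    using assms by (intro exI[of _ "length L1 + j"]) (simp add: nth_default_append)
qed

lemma justified_entry_append_left:
  "justified_entry (nth_default 0 L1) k \<Longrightarrow> k < length L1
    \<Longrightarrow> justified_entry (nth_default 0 (L1 @ L2)) k"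
  by (erule justified_entry_mono)
    (simp_all add: nth_default_append nth_default_nth embeds_append_left)

lemma justified_entry_append_right:
  "justified_entry (nth_default 0 L2) k \<Longrightarrow> justified_entry (nth_default 0 (L1 @ L2)) (length L1 + k)"
  by (erule justified_entry_mono) (simp_all add: nth_default_append embeds_append_right)

lemma valid_trace_append: "valid_trace L1 \<Longrightarrow> valid_trace L2 \<Longrightarrow> valid_trace (L1 @ L2)"
  unfolding valid_trace_def
proof (intro allI impI)
  fix k assume L: "\<forall>k<length L1. justified_entry (nth_default 0 L1) k"
    "\<forall>k<length L2. justified_entry (nth_default 0 L2) k" and k: "k < length (L1 @ L2)"
  show "justified_entry (nth_default 0 (L1 @ L2)) k"
  proof (cases "k < length L1")
    case True
    then show ?thesis using L(1) by (simp add: justified_entry_append_left)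
  next
    case False
    then obtain k2 where "k = length L1 + k2" "k2 < length L2"
      using k by (metis add_diff_inverse_nat length_append nat_add_left_cancel_less)
    then show ?thesis using L(2) by (simp add: justified_entry_append_right)
  qed
qed

lemma valid_trace_Nil [simp]: "valid_trace []"
  by (simp add: valid_trace_def)

lemma valid_trace_concat: "\<forall>L\<in>set Ls. valid_trace L \<Longrightarrow> valid_trace (concat Ls)"
  by (induction Ls) (auto intro: valid_trace_append)

lemma in_trace_append_left: "in_trace L1 p x v \<Longrightarrow> in_trace (L1 @ L2) p x v"
  unfolding in_trace_def by (erule recorded_before_mono) (simp add: embeds_append_left)

lemma in_trace_append_right: "in_trace L2 p x v \<Longrightarrow> in_trace (L1 @ L2) p x v"
  unfolding in_trace_def by (erule recorded_before_mono) (simp add: embeds_append_right)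

lemma in_trace_concat: "L \<in> set Ls \<Longrightarrow> in_trace L p x v \<Longrightarrow> in_trace (concat Ls) p x v"
  by (induction Ls) (auto intro: in_trace_append_left in_trace_append_right)

lemma valid_trace_snoc:
  assumes "valid_trace L" "justified (nth_default 0 L) (length L) p x v a"
  shows "valid_trace (L @ [list_encode [p, x, v, a]])"
    and "in_trace (L @ [list_encode [p, x, v, a]]) p x v"
proof -
  let ?e = "list_encode [p, x, v, a]"
  have e: "nth_default 0 (L @ [?e]) (length L) = ?e" by (simp add: nth_default_append)
  have "justified (nth_default 0 (L @ [?e])) (length L) p x v a"
    using assms(2) by (rule justified_mono) (simp add: embeds_append_left)
  then have "justified_entry (nth_default 0 (L @ [?e])) (length L)"
    by (simp add: justified_entry_def e nth_default_def)
  with assms(1) show "valid_trace (L @ [?e])"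
    unfolding valid_trace_def by (auto simp: less_Suc_eq justified_entry_append_left)
  show "in_trace (L @ [?e]) p x v"
    unfolding in_trace_def recorded_before_def entry_is_def using e
    by (intro exI[of _ "length L"]) (simp add: nth_default_def)
qed

lemma computes_single_step:
  assumes "justified (nth_default 0 []) 0 p x v a"
  shows "\<exists>L. valid_trace L \<and> in_trace L p x v"
  using valid_trace_snoc[OF valid_trace_Nil, of p x v a] assms by auto

lemma valid_trace_comp_step:
  assumes "code_nth p 0 = 3" "code_length w = code_length (code_nth p 2)"
    and args: "\<And>i. i < code_length w
      \<Longrightarrow> \<exists>L. valid_trace L \<and> in_trace L (code_nth (code_nth p 2) i) x (code_nth w i)"
    and "\<exists>L. valid_trace L \<and> in_trace L (code_nth p 1) w v"
  shows "\<exists>L. valid_trace L \<and> in_trace L p x v"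
proof -
  obtain Ls where Ls: "\<And>i. i < code_length w
      \<Longrightarrow> valid_trace (Ls i) \<and> in_trace (Ls i) (code_nth (code_nth p 2) i) x (code_nth w i)"
    using args by metis
  obtain Lc where Lc: "valid_trace Lc" "in_trace Lc (code_nth p 1) w v" using assms(4) by blast
  define L where "L = concat (map Ls [0..<code_length w]) @ Lc"
  have valid: "valid_trace L" unfolding L_def
    by (intro valid_trace_append valid_trace_concat Lc) (auto dest: Ls)
  have "in_trace L (code_nth (code_nth p 2) i) x (code_nth w i)" if "i < code_length w" for i
    unfolding L_def using that Ls by (intro in_trace_append_left in_trace_concat[of "Ls i"]) auto
  moreover have "in_trace L (code_nth p 1) w v"
    unfolding L_def using Lc by (intro in_trace_append_right)
  ultimately have "justified (nth_default 0 L) (length L) p x v w"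
    using assms(1,2) by (simp add: justified_def in_trace_def)
  with valid show ?thesis using valid_trace_snoc by blast
qed

lemma valid_trace_mu_step:
  assumes "code_nth p 0 = 5" "\<exists>L. valid_trace L \<and> in_trace L (code_nth p 1) (code_Cons v x) 0"
    and smaller: "\<And>y. y < v
      \<Longrightarrow> \<exists>w L. w \<noteq> 0 \<and> valid_trace L \<and> in_trace L (code_nth p 1) (code_Cons y x) w"
  shows "\<exists>L. valid_trace L \<and> in_trace L p x v"
proof -
  obtain L0 where L0: "valid_trace L0" "in_trace L0 (code_nth p 1) (code_Cons v x) 0"
    using assms(2) by blast
  obtain Ls W where Ls: "\<And>y. y < v
      \<Longrightarrow> W y \<noteq> 0 \<and> valid_trace (Ls y) \<and> in_trace (Ls y) (code_nth p 1) (code_Cons y x) (W y)"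
    using smaller by metis
  define L where "L = L0 @ concat (map Ls [0..<v])"
  have valid: "valid_trace L" unfolding L_def
    by (intro valid_trace_append valid_trace_concat L0) (auto dest: Ls)
  have "in_trace L (code_nth p 1) (code_Cons y x) (W y)" if "y < v" for y
    unfolding L_def using that Ls by (intro in_trace_append_right in_trace_concat[of "Ls y"]) auto
  then have "recorded_nonzero_before (nth_default 0 L) (length L) (code_nth p 1) (code_Cons y x)"
    if "y < v" for y
    using that Ls unfolding in_trace_def by (blast intro: recorded_nonzero_beforeI)
  moreover have "in_trace L (code_nth p 1) (code_Cons v x) 0"
    unfolding L_def by (rule in_trace_append_left[OF L0(2)])
  ultimately have "justified (nth_default 0 L) (length L) p x v 0"
    using assms(1) by (simp add: justified_def in_trace_def)
  with valid show ?thesis using valid_trace_snoc by blast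
qed

theorem computes_has_valid_trace: "computes p x v \<Longrightarrow> \<exists>L. valid_trace L \<and> in_trace L p x v"
proof (induction rule: computes.induct)
  case (computes_zero p x)
  then show ?case by (intro computes_single_step[where a = 0]) (simp add: justified_def)
next
  case (computes_succ p x)
  then show ?case by (intro computes_single_step[where a = 0]) (simp add: justified_def)
next
  case (computes_proj p x)
  then show ?case by (intro computes_single_step[where a = 0]) (simp add: justified_def)
next
  case (computes_comp p w x v)
  show ?case by (rule valid_trace_comp_step) (use computes_comp in auto)
next
  case (computes_prim_0 p x v)
  then obtain L where "valid_trace L" "in_trace L (code_nth p 1) (code_tl x) v" by blast
  moreover have "justified (nth_default 0 L) (length L) p x v 0"
    using computes_prim_0 calculation by (simp add: justified_def in_trace_def)
  ultimately show ?case using valid_trace_snoc by blast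
next
  case (computes_prim_Suc p x a r v)
  then obtain L1 L2 where L: "valid_trace L1" "in_trace L1 p (code_Cons a (code_tl x)) r"
    "valid_trace L2" "in_trace L2 (code_nth p 2) (code_Cons a (code_Cons r (code_tl x))) v"
    by blast
  have "justified (nth_default 0 (L1 @ L2)) (length (L1 @ L2)) p x v r"
    using computes_prim_Suc(1-3) in_trace_append_left[OF L(2)] in_trace_append_right[OF L(4)]
    by (simp add: justified_def in_trace_def)
  moreover have "valid_trace (L1 @ L2)" using L by (simp add: valid_trace_append)
  ultimately show ?case using valid_trace_snoc by blast
next
  case (computes_mu p v x)
  show ?case by (rule valid_trace_mu_step) (use computes_mu in blast)+
qed

definition "FieldX = App CodeNthX [App CodeNthX [V 0, V 1], V 2]"

lemma eval_FieldX [simp]: "eval_expr FieldX [s, j, i] = code_nth (code_nth s j) i"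
  by (simp add: FieldX_def)

lemma wf_FieldX [simp]: "wf_expr (Suc (Suc (Suc 0))) FieldX"
  by (simp add: FieldX_def)

definition "RecordedBeforeX = ExLessX (V 1) (AndX (EqX (App FieldX [V 1, V 0, C 0]) (V 3))
  (AndX (EqX (App FieldX [V 1, V 0, C 1]) (V 4)) (EqX (App FieldX [V 1, V 0, C 2]) (V 5))))"

lemma eval_RecordedBeforeX [simp]:
  "eval_expr RecordedBeforeX [s, k, p, x, v] =
     (if recorded_before (code_nth s) k p x v then 1 else 0)"
  by (auto simp: RecordedBeforeX_def recorded_before_def entry_is_def)

lemma wf_RecordedBeforeX [simp]: "wf_expr (Suc (Suc (Suc (Suc (Suc 0))))) RecordedBeforeX"
  by (simp add: RecordedBeforeX_def)

definition "RecordedNonzeroX = ExLessX (V 1) (AndX (EqX (App FieldX [V 1, V 0, C 0]) (V 3))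
  (AndX (EqX (App FieldX [V 1, V 0, C 1]) (V 4)) (SgnX (App FieldX [V 1, V 0, C 2]))))"

lemma eval_RecordedNonzeroX [simp]:
  "eval_expr RecordedNonzeroX [s, k, p, x] =
     (if recorded_nonzero_before (code_nth s) k p x then 1 else 0)"
  by (auto simp: RecordedNonzeroX_def recorded_nonzero_before_def)

lemma wf_RecordedNonzeroX [simp]: "wf_expr (Suc (Suc (Suc (Suc 0)))) RecordedNonzeroX"
  by (simp add: RecordedNonzeroX_def)

definition "OpcodeX = App CodeNthX [V 2, C 0]"
definition "ZeroCaseX = AndX (EqX OpcodeX (C 0)) (EqX (V 4) (C 0))"
definition "SuccCaseX = AndX (EqX OpcodeX (C 1)) (EqX (V 4) (Add (App CodeNthX [V 3, C 0]) (C 1)))"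
definition "ProjCaseX =
  AndX (EqX OpcodeX (C 2)) (EqX (V 4) (App CodeNthX [V 3, App CodeNthX [V 2, C 1]]))"
definition "CompCaseX = AndX (EqX OpcodeX (C 3))
  (AndX (EqX (App CodeLengthX [V 5]) (App CodeLengthX [App CodeNthX [V 2, C 2]]))
  (AndX (AllLessX (App CodeLengthX [V 5])
          (App RecordedBeforeX [V 1, V 2, App CodeNthX [App CodeNthX [V 3, C 2], V 0], V 4,
             App CodeNthX [V 6, V 0]]))
    (App RecordedBeforeX [V 0, V 1, App CodeNthX [V 2, C 1], V 5, V 4])))"
definition "PrimZeroCaseX = AndX (EqX OpcodeX (C 4))
  (AndX (SgnX (V 3)) (AndX (EqX (App CodeNthX [V 3, C 0]) (C 0))
    (App RecordedBeforeX [V 0, V 1, App CodeNthX [V 2, C 1], App CodeTlX [V 3], V 4])))"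
definition "PrimSucCaseX = AndX (EqX OpcodeX (C 4))
  (AndX (SgnX (V 3)) (AndX (SgnX (App CodeNthX [V 3, C 0]))
  (AndX (App RecordedBeforeX [V 0, V 1, V 2,
          App CodeConsX [Sub (App CodeNthX [V 3, C 0]) (C 1), App CodeTlX [V 3]], V 5])
    (App RecordedBeforeX [V 0, V 1, App CodeNthX [V 2, C 2],
       App CodeConsX [Sub (App CodeNthX [V 3, C 0]) (C 1), App CodeConsX [V 5, App CodeTlX [V 3]]],
       V 4]))))"
definition "MuCaseX = AndX (EqX OpcodeX (C 5))
  (AndX (App RecordedBeforeX [V 0, V 1, App CodeNthX [V 2, C 1], App CodeConsX [V 4, V 3], C 0])
    (AllLessX (V 4)
      (App RecordedNonzeroX [V 1, V 2, App CodeNthX [V 3, C 1], App CodeConsX [V 0, V 4]])))"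
definition "JustifiedX = OrX ZeroCaseX (OrX SuccCaseX (OrX ProjCaseX (OrX CompCaseX
  (OrX PrimZeroCaseX (OrX PrimSucCaseX MuCaseX)))))"

lemma eval_ZeroCaseX: "eval_expr ZeroCaseX [s, k, p, x, v, a] \<noteq> 0 \<longleftrightarrow> code_nth p 0 = 0 \<and> v = 0"
  by (auto simp: ZeroCaseX_def OpcodeX_def)

lemma eval_SuccCaseX:
  "eval_expr SuccCaseX [s, k, p, x, v, a] \<noteq> 0 \<longleftrightarrow> code_nth p 0 = 1 \<and> v = Suc (code_nth x 0)"
  by (auto simp: SuccCaseX_def OpcodeX_def)

lemma eval_ProjCaseX:
  "eval_expr ProjCaseX [s, k, p, x, v, a] \<noteq> 0 \<longleftrightarrow> code_nth p 0 = 2 \<and> v = code_nth x (code_nth p 1)"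
  by (auto simp: ProjCaseX_def OpcodeX_def)

lemma eval_CompCaseX:
  "eval_expr CompCaseX [s, k, p, x, v, a] \<noteq> 0 \<longleftrightarrow>
     code_nth p 0 = 3 \<and> code_length a = code_length (code_nth p 2) \<and>
     (\<forall>i<code_length a.
        recorded_before (code_nth s) k (code_nth (code_nth p 2) i) x (code_nth a i)) \<and>
     recorded_before (code_nth s) k (code_nth p 1) a v"
  by (auto simp: CompCaseX_def OpcodeX_def)

lemma eval_PrimZeroCaseX:
  "eval_expr PrimZeroCaseX [s, k, p, x, v, a] \<noteq> 0 \<longleftrightarrow>
     code_nth p 0 = 4 \<and> x \<noteq> 0 \<and> code_nth x 0 = 0 \<and>
     recorded_before (code_nth s) k (code_nth p 1) (code_tl x) v"
  by (auto simp: PrimZeroCaseX_def OpcodeX_def)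

lemma eval_PrimSucCaseX:
  "eval_expr PrimSucCaseX [s, k, p, x, v, a] \<noteq> 0 \<longleftrightarrow>
     code_nth p 0 = 4 \<and> x \<noteq> 0 \<and> code_nth x 0 \<noteq> 0 \<and>
     recorded_before (code_nth s) k p (code_Cons (code_nth x 0 - 1) (code_tl x)) a \<and>
     recorded_before (code_nth s) k (code_nth p 2)
       (code_Cons (code_nth x 0 - 1) (code_Cons a (code_tl x))) v"
  by (auto simp: PrimSucCaseX_def OpcodeX_def)

lemma eval_MuCaseX:
  "eval_expr MuCaseX [s, k, p, x, v, a] \<noteq> 0 \<longleftrightarrow>
     code_nth p 0 = 5 \<and> recorded_before (code_nth s) k (code_nth p 1) (code_Cons v x) 0 \<and>
     (\<forall>y<v. recorded_nonzero_before (code_nth s) k (code_nth p 1) (code_Cons y x))"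
  by (auto simp: MuCaseX_def OpcodeX_def)

lemma eval_JustifiedX [simp]:
  "eval_expr JustifiedX [s, k, p, x, v, a] = (if justified (code_nth s) k p x v a then 1 else 0)"
  unfolding JustifiedX_def eval_macros eval_ZeroCaseX eval_SuccCaseX eval_ProjCaseX eval_CompCaseX
    eval_PrimZeroCaseX eval_PrimSucCaseX eval_MuCaseX justified_def[of "code_nth s"]
  by simp

lemma wf_JustifiedX [simp]: "wf_expr (Suc (Suc (Suc (Suc (Suc (Suc 0)))))) JustifiedX"
  by (simp add: JustifiedX_def ZeroCaseX_def SuccCaseX_def ProjCaseX_def CompCaseX_def
      PrimZeroCaseX_def PrimSucCaseX_def MuCaseX_def OpcodeX_def)

definition "ValidTraceX = AllLessX (App CodeLengthX [V 0])
  (App JustifiedX [V 1, V 0, App FieldX [V 1, V 0, C 0], App FieldX [V 1, V 0, C 1],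
     App FieldX [V 1, V 0, C 2], App FieldX [V 1, V 0, C 3]])"

lemma eval_ValidTraceX [simp]: "eval_expr ValidTraceX [s] = (if valid_trace_code s then 1 else 0)"
  by (auto simp: ValidTraceX_def valid_trace_code_def justified_entry_def)

lemma wf_ValidTraceX [simp]: "wf_expr (Suc 0) ValidTraceX"
  by (simp add: ValidTraceX_def)

text \<open>Kleene's \<open>T\<close> predicate: \<open>w = \<langle>y, s\<rangle>\<close> where \<open>s\<close> is a valid trace recording a nonzero output of
  the program \<open>e\<close> on the input \<open>[y, x]\<close>.\<close>

definition kleene_T :: "nat \<Rightarrow> nat \<Rightarrow> nat \<Rightarrow> bool" where
  "kleene_T e x w \<longleftrightarrow> valid_trace_code (pair_snd w) \<and>
     (\<exists>k<code_length (pair_snd w). code_nth (code_nth (pair_snd w) k) 0 = e \<and>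
        code_nth (code_nth (pair_snd w) k) 1 = code_Cons (pair_fst w) (code_Cons x 0) \<and>
        code_nth (code_nth (pair_snd w) k) 2 \<noteq> 0)"

definition "KleeneTX = AndX (App ValidTraceX [App PairSndX [V 2]])
  (ExLessX (App CodeLengthX [App PairSndX [V 2]])
  (AndX (EqX (App FieldX [App PairSndX [V 3], V 0, C 0]) (V 1))
  (AndX (EqX (App FieldX [App PairSndX [V 3], V 0, C 1])
          (App CodeConsX [App PairFstX [V 3], App CodeConsX [V 2, C 0]]))
    (SgnX (App FieldX [App PairSndX [V 3], V 0, C 2])))))"

lemma eval_KleeneTX [simp]: "eval_expr KleeneTX [e, x, w] = (if kleene_T e x w then 1 else 0)"
  by (auto simp: KleeneTX_def kleene_T_def)

lemma wf_KleeneTX [simp]: "wf_expr (Suc (Suc (Suc 0))) KleeneTX"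
  by (simp add: KleeneTX_def)

definition sigma1_univ :: "nat \<Rightarrow> nat \<Rightarrow> bool" where "sigma1_univ e x \<longleftrightarrow> (\<exists>w. kleene_T e x w)"

lemma code_Cons_pair: "code_Cons y (code_Cons x 0) = list_encode [y, x]"
proof -
  have "code_Cons x 0 = list_encode [x]" using code_Cons_list_encode[of x "[]"] by simp
  then show ?thesis using code_Cons_list_encode[of y "[x]"] by simp
qed

theorem sigma1_univ_enumerates:
  assumes "total_rec 2 f"
  shows "\<exists>e. \<forall>x. (\<exists>y. f [y, x] \<noteq> 0) \<longleftrightarrow> sigma1_univ e x"
proof -
  obtain p where p: "implements 2 f p" using total_rec_implemented[OF assms] by blast
  have computes_iff: "computes p (list_encode [y, x]) v \<longleftrightarrow> v = f [y, x]" for y x v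
    using p by (simp add: implements_def)
  have "(\<exists>y. f [y, x] \<noteq> 0) \<longleftrightarrow> sigma1_univ p x" for x
  proof
    assume "\<exists>y. f [y, x] \<noteq> 0"
    then obtain y where y: "f [y, x] \<noteq> 0" by blast
    have "computes p (list_encode [y, x]) (f [y, x])" using computes_iff by simp
    then obtain L where L: "valid_trace L" "in_trace L p (list_encode [y, x]) (f [y, x])"
      using computes_has_valid_trace by blast
    define w where "w = prod_encode (y, list_encode L)"
    have pw: "pair_snd w = list_encode L" "pair_fst w = y"
      by (simp_all add: w_def pair_snd_def pair_fst_def)
    obtain k where k: "k < length L"
      "entry_is (nth_default 0 L) k p (list_encode [y, x]) (f [y, x])"
      using L(2) by (auto simp: in_trace_def recorded_before_def)
    have "kleene_T p x w" unfolding kleene_T_def pw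
      using L(1) k y
      by (auto simp: valid_trace_code_list_encode code_Cons_pair entry_is_def intro!: exI[of _ k])
    then show "sigma1_univ p x" by (auto simp: sigma1_univ_def)
  next
    assume "sigma1_univ p x"
    then obtain w where "kleene_T p x w" by (auto simp: sigma1_univ_def)
    then obtain k where k: "valid_trace_code (pair_snd w)" "k < code_length (pair_snd w)"
      and entry: "code_nth (code_nth (pair_snd w) k) 0 = p"
        "code_nth (code_nth (pair_snd w) k) 1 = list_encode [pair_fst w, x]"
        "code_nth (code_nth (pair_snd w) k) 2 \<noteq> 0"
      by (auto simp: kleene_T_def code_Cons_pair)
    have "computes (code_nth (code_nth (pair_snd w) k) 0) (code_nth (code_nth (pair_snd w) k) 1)
        (code_nth (code_nth (pair_snd w) k) 2)"
      using valid_trace_code_sound k .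
    then have "code_nth (code_nth (pair_snd w) k) 2 = f [pair_fst w, x]"
      using entry(1,2) computes_iff by simp
    then show "\<exists>y. f [y, x] \<noteq> 0" using entry(3) by auto
  qed
  then show ?thesis by blast
qed

section \<open>Closure properties of \<open>\<Sigma>\<close> relations\<close>

lemma decidable_rel_iff_expr:
  "decidable_rel n R \<longleftrightarrow>
     (\<exists>e. wf_expr n e \<and> (\<forall>xs. length xs = n \<longrightarrow> (R xs \<longleftrightarrow> eval_expr e xs \<noteq> 0)))"
proof
  assume "decidable_rel n R"
  then obtain f where f: "total_rec n f" "\<forall>xs. length xs = n \<longrightarrow> (R xs \<longleftrightarrow> f xs = 0)"
    by (auto simp: decidable_rel_def)
  then show "\<exists>e. wf_expr n e \<and> (\<forall>xs. length xs = n \<longrightarrow> (R xs \<longleftrightarrow> eval_expr e xs \<noteq> 0))"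
    by (intro exI[of _ "NotX (Fn f)"]) auto
next
  assume "\<exists>e. wf_expr n e \<and> (\<forall>xs. length xs = n \<longrightarrow> (R xs \<longleftrightarrow> eval_expr e xs \<noteq> 0))"
  then obtain e where e: "wf_expr n e" "\<forall>xs. length xs = n \<longrightarrow> (R xs \<longleftrightarrow> eval_expr e xs \<noteq> 0)"
    by blast
  have "total_rec n (eval_expr (NotX e))" using e(1) by (intro total_rec_eval_expr) simp
  then show "decidable_rel n R" unfolding decidable_rel_def using e(2)
    by (intro exI[of _ "eval_expr (NotX e)"]) auto
qed

lemma decidable_relI:
  "wf_expr n e \<Longrightarrow> (\<And>xs. length xs = n \<Longrightarrow> R xs \<longleftrightarrow> eval_expr e xs \<noteq> 0)
    \<Longrightarrow> decidable_rel n R"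
  unfolding decidable_rel_iff_expr by blast

lemma sigma_rel_cong:
  "sigma_rel q n R \<Longrightarrow> (\<And>xs. length xs = n \<Longrightarrow> R' xs = R xs) \<Longrightarrow> sigma_rel q n R'"
  by (cases q) (auto simp: decidable_rel_iff_expr)

definition shift_expr :: "nat \<Rightarrow> expr \<Rightarrow> expr" where
  "shift_expr n g = App g (map V [1..<Suc n])"

lemma eval_shift_expr [simp]: "length xs = n \<Longrightarrow> eval_expr (shift_expr n g) (y # xs) = eval_expr g xs"
proof -
  assume l: "length xs = n"
  have "map (\<lambda>a. eval_expr a (y # xs)) (map V [1..<Suc n]) = xs"
    using l by (intro nth_equalityI) (auto simp: nth_Cons' simp del: upt_Suc)
  then show ?thesis by (simp add: shift_expr_def)
qed

lemma wf_shift_expr [simp]: "wf_expr (Suc n) (shift_expr n g) = wf_expr n g"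
  by (auto simp: shift_expr_def simp del: upt_Suc)

lemma sigma_rel_subst:
  "sigma_rel q m Q \<Longrightarrow> length gs = m \<Longrightarrow> \<forall>g\<in>set gs. wf_expr n g \<Longrightarrow>
   sigma_rel q n (\<lambda>xs. Q (map (\<lambda>g. eval_expr g xs) gs))"
proof (induction q arbitrary: n m Q gs)
  case 0
  then obtain e where e: "wf_expr m e" "\<forall>xs. length xs = m \<longrightarrow> (Q xs \<longleftrightarrow> eval_expr e xs \<noteq> 0)"
    by (auto simp: decidable_rel_iff_expr)
  show ?case unfolding sigma_rel.simps
    by (rule decidable_relI[where e = "App e gs"]) (use 0 e in auto)
next
  case (Suc q)
  then obtain Q' where Q': "sigma_rel q (Suc m) Q'"
    "\<forall>ys. length ys = m \<longrightarrow> (Q ys \<longleftrightarrow> (\<exists>y. \<not> Q' (y # ys)))"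
    by auto
  let ?gs = "V 0 # map (shift_expr n) gs"
  have "sigma_rel q (Suc n) (\<lambda>xs. Q' (map (\<lambda>g. eval_expr g xs) ?gs))"
    by (rule Suc.IH[OF Q'(1)]) (use Suc.prems in auto)
  moreover have "map (\<lambda>g. eval_expr g (y # xs)) ?gs = y # map (\<lambda>g. eval_expr g xs) gs"
    if "length xs = n" for y xs
    using that by simp
  ultimately show ?case unfolding sigma_rel.simps
    by (intro exI[of _ "\<lambda>xs. Q' (map (\<lambda>g. eval_expr g xs) ?gs)"] conjI allI impI)
       (simp_all only: Q'(2) Suc.prems(2) length_map)
qed

lemma decidable_rel_tl: "decidable_rel n D \<Longrightarrow> decidable_rel (Suc n) (\<lambda>xs. D (tl xs))"
proof -
  assume "decidable_rel n D"
  then obtain e where e: "wf_expr n e" "\<forall>xs. length xs = n \<longrightarrow> (D xs \<longleftrightarrow> eval_expr e xs \<noteq> 0)"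
    by (auto simp: decidable_rel_iff_expr)
  show ?thesis
  proof (rule decidable_relI[where e = "shift_expr n e"])
    show "wf_expr (Suc n) (shift_expr n e)" using e by simp
    fix xs :: "nat list" assume "length xs = Suc n"
    then obtain y ys where "xs = y # ys" "length ys = n" by (cases xs) auto
    then show "D (tl xs) \<longleftrightarrow> eval_expr (shift_expr n e) xs \<noteq> 0" using e by simp
  qed
qed

lemma decidable_rel_not: "decidable_rel n D \<Longrightarrow> decidable_rel n (\<lambda>xs. \<not> D xs)"
  unfolding decidable_rel_iff_expr by (metis eval_NotX wf_macros(2) zero_neq_one)

lemma decidable_rel_disj:
  "decidable_rel n D \<Longrightarrow> decidable_rel n E \<Longrightarrow> decidable_rel n (\<lambda>xs. D xs \<or> E xs)"
proof -
  assume "decidable_rel n D" "decidable_rel n E"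
  then obtain d e where d: "wf_expr n d" "\<forall>xs. length xs = n \<longrightarrow> (D xs \<longleftrightarrow> eval_expr d xs \<noteq> 0)"
    and e: "wf_expr n e" "\<forall>xs. length xs = n \<longrightarrow> (E xs \<longleftrightarrow> eval_expr e xs \<noteq> 0)"
    by (auto simp: decidable_rel_iff_expr)
  show ?thesis by (rule decidable_relI[where e = "OrX d e"]) (use d e in auto)
qed

lemma decidable_rel_conj:
  "decidable_rel n D \<Longrightarrow> decidable_rel n E \<Longrightarrow> decidable_rel n (\<lambda>xs. D xs \<and> E xs)"
proof -
  assume "decidable_rel n D" "decidable_rel n E"
  then obtain d e where d: "wf_expr n d" "\<forall>xs. length xs = n \<longrightarrow> (D xs \<longleftrightarrow> eval_expr d xs \<noteq> 0)"
    and e: "wf_expr n e" "\<forall>xs. length xs = n \<longrightarrow> (E xs \<longleftrightarrow> eval_expr e xs \<noteq> 0)"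
    by (auto simp: decidable_rel_iff_expr)
  show ?thesis by (rule decidable_relI[where e = "AndX d e"]) (use d e in auto)
qed

text \<open>Disjunction and conjunction are treated together: negating the matrix swaps them.\<close>

lemma sigma_rel_disj_conj_decidable:
  "sigma_rel q n R \<Longrightarrow> decidable_rel n D \<Longrightarrow>
    sigma_rel q n (\<lambda>xs. R xs \<or> D xs) \<and> sigma_rel q n (\<lambda>xs. R xs \<and> D xs)"
proof (induction q arbitrary: n R D)
  case 0
  then show ?case by (simp add: decidable_rel_disj decidable_rel_conj)
next
  case (Suc q)
  then obtain Q where Q: "sigma_rel q (Suc n) Q"
    "\<forall>xs. length xs = n \<longrightarrow> (R xs \<longleftrightarrow> (\<exists>y. \<not> Q (y # xs)))"
    by auto
  have "decidable_rel (Suc n) (\<lambda>xs. \<not> D (tl xs))"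
    using decidable_rel_not[OF decidable_rel_tl[OF Suc.prems(2)]] .
  then have conj: "sigma_rel q (Suc n) (\<lambda>xs. Q xs \<and> \<not> D (tl xs))"
    and disj: "sigma_rel q (Suc n) (\<lambda>xs. Q xs \<or> \<not> D (tl xs))"
    using Suc.IH[OF Q(1)] by blast+
  show ?case
  proof
    show "sigma_rel (Suc q) n (\<lambda>xs. R xs \<or> D xs)" unfolding sigma_rel.simps
      by (rule exI[of _ "\<lambda>xs. Q xs \<and> \<not> D (tl xs)"]) (use conj Q(2) in auto)
    show "sigma_rel (Suc q) n (\<lambda>xs. R xs \<and> D xs)" unfolding sigma_rel.simps
      by (rule exI[of _ "\<lambda>xs. Q xs \<or> \<not> D (tl xs)"]) (use disj Q(2) in auto)
  qed
qed

lemma sigma_rel_disj_decidable: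
  "sigma_rel q n R \<Longrightarrow> decidable_rel n D \<Longrightarrow> sigma_rel q n (\<lambda>xs. R xs \<or> D xs)"
  using sigma_rel_disj_conj_decidable by blast

lemma sigma_rel_conj_decidable:
  "sigma_rel q n R \<Longrightarrow> decidable_rel n D \<Longrightarrow> sigma_rel q n (\<lambda>xs. R xs \<and> D xs)"
  using sigma_rel_disj_conj_decidable by blast

lemma sigma_rel_Suc: "sigma_rel q n R \<Longrightarrow> sigma_rel (Suc q) n R"
proof (induction q arbitrary: n R)
  case 0
  have "decidable_rel (Suc n) (\<lambda>xs. \<not> R (tl xs))"
    using decidable_rel_not[OF decidable_rel_tl] 0 by simp
  then show ?case unfolding sigma_rel.simps
    by (intro exI[of _ "\<lambda>xs. \<not> R (tl xs)"]) auto
next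
  case (Suc q)
  then obtain Q where "sigma_rel q (Suc n) Q"
    "\<forall>xs. length xs = n \<longrightarrow> (R xs \<longleftrightarrow> (\<exists>y. \<not> Q (y # xs)))"
    by auto
  with Suc.IH show ?case by (metis sigma_rel.simps(2))
qed

lemma sigma_rel_mono: "sigma_rel q n R \<Longrightarrow> q \<le> p \<Longrightarrow> sigma_rel p n R"
proof (induction p)
  case (Suc p)
  then show ?case by (metis le_Suc_eq sigma_rel_Suc)
qed simp

text \<open>The quantifiers \<open>\<exists>k<b. \<exists>y\<close> are merged into one \<open>\<exists>w\<close> over pairs \<open>w = \<langle>k, y\<rangle>\<close>, and the
  bound \<open>k < b\<close> moves into the matrix.\<close>

lemma sigma_rel_bounded_ex:
  "sigma_rel q (Suc n) Q \<Longrightarrow> wf_expr n b \<Longrightarrow> sigma_rel q n (\<lambda>xs. \<exists>k<eval_expr b xs. Q (k # xs))"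
proof (induction q arbitrary: n Q b)
  case 0
  then obtain e where e: "wf_expr (Suc n) e"
    "\<forall>xs. length xs = Suc n \<longrightarrow> (Q xs \<longleftrightarrow> eval_expr e xs \<noteq> 0)"
    by (auto simp: decidable_rel_iff_expr)
  show ?case unfolding sigma_rel.simps
    by (rule decidable_relI[where e = "ExLessX b e"]) (use 0 e in auto)
next
  case (Suc q)
  then obtain Q' where Q': "sigma_rel q (Suc (Suc n)) Q'"
    "\<forall>xs. length xs = Suc n \<longrightarrow> (Q xs \<longleftrightarrow> (\<exists>y. \<not> Q' (y # xs)))"
    by auto
  let ?gs = "App PairSndX [V 0] # App PairFstX [V 0] # map (\<lambda>i. V (Suc i)) [0..<n]"
  let ?out_of_bound = "NotX (LessX (App PairFstX [V 0]) (shift_expr n b))"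
  define M where "M xs \<longleftrightarrow> Q' (map (\<lambda>g. eval_expr g xs) ?gs) \<or> eval_expr ?out_of_bound xs \<noteq> 0" for xs
  have gs: "map (\<lambda>g. eval_expr g (w # xs)) ?gs = pair_snd w # pair_fst w # xs"
    if "length xs = n" for w xs
    using that by (auto intro!: nth_equalityI)
  have M: "M (w # xs) \<longleftrightarrow> Q' (pair_snd w # pair_fst w # xs) \<or> \<not> pair_fst w < eval_expr b xs"
    if "length xs = n" for w xs
    unfolding M_def gs[OF that] using that by simp
  have "sigma_rel q (Suc n) (\<lambda>xs. Q' (map (\<lambda>g. eval_expr g xs) ?gs))"
    by (rule sigma_rel_subst[OF Q'(1)]) auto
  moreover have "decidable_rel (Suc n) (\<lambda>xs. eval_expr ?out_of_bound xs \<noteq> 0)"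
    by (rule decidable_relI[where e = ?out_of_bound]) (use Suc.prems in simp_all)
  ultimately have "sigma_rel q (Suc n) M"
    unfolding M_def by (rule sigma_rel_disj_decidable)
  moreover have "(\<exists>k<eval_expr b xs. Q (k # xs)) \<longleftrightarrow> (\<exists>w. \<not> M (w # xs))" if xs: "length xs = n" for xs
  proof -
    have "(\<exists>k<eval_expr b xs. Q (k # xs)) \<longleftrightarrow> (\<exists>k. k < eval_expr b xs \<and> (\<exists>y. \<not> Q' (y # k # xs)))"
      using Q'(2) xs by simp
    also have "\<dots> \<longleftrightarrow> (\<exists>w. pair_fst w < eval_expr b xs \<and> \<not> Q' (pair_snd w # pair_fst w # xs))"
      by (rule ex_pair_iff)
    finally show ?thesis using M[OF xs] by blast
  qed
  ultimately show ?case unfolding sigma_rel.simps by blast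
qed
section \<open>Universal \<open>\<Sigma>\<close> relations and the halting set\<close>

text \<open>\<open>univ_sigma q e\<close> enumerates the unary \<open>\<Sigma>\<^sub>q\<^sub>+\<^sub>1\<close> relations; each level adds one quantifier
  \<open>\<exists>y. \<not> \<dots>\<close>, pairing the new variable with the argument.\<close>

fun univ_sigma :: "nat \<Rightarrow> nat \<Rightarrow> nat \<Rightarrow> bool" where
  "univ_sigma 0 e x = sigma1_univ e x"
| "univ_sigma (Suc q) e x = (\<exists>y. \<not> univ_sigma q e (prod_encode (y, x)))"

lemma sigma_rel_univ_sigma: "sigma_rel (Suc q) 2 (\<lambda>xs. univ_sigma q (xs ! 0) (xs ! 1))"
proof (induction q)
  case 0
  have d: "decidable_rel 3 (\<lambda>xs. \<not> kleene_T (xs ! 1) (xs ! 2) (xs ! 0))"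
    by (rule decidable_relI[where e = "NotX (App KleeneTX [V 1, V 2, V 0])"])
      (auto simp: numeral_eq_Suc)
  show ?case unfolding sigma_rel.simps
    by (rule exI[of _ "\<lambda>xs. \<not> kleene_T (xs ! 1) (xs ! 2) (xs ! 0)"])
       (use d in \<open>auto simp: sigma1_univ_def numeral_eq_Suc\<close>)
next
  case (Suc q)
  let ?Q = "\<lambda>xs. (\<lambda>ys. univ_sigma q (ys ! 0) (ys ! 1))
    (map (\<lambda>g. eval_expr g xs) [V 1, App PairX [V 0, V 2]])"
  have "sigma_rel (Suc q) 3 ?Q"
    by (rule sigma_rel_subst[OF Suc.IH]) (auto simp: numeral_eq_Suc)
  then show ?case unfolding sigma_rel.simps(2)[of "Suc q"]
    by (intro exI[of _ ?Q]) (auto simp: numeral_eq_Suc)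
qed

lemma univ_sigma_enumerates: "sigma_rel (Suc q) 1 S \<Longrightarrow> \<exists>e. \<forall>x. S [x] \<longleftrightarrow> univ_sigma q e x"
proof (induction q arbitrary: S)
  case 0
  then obtain Q where Q: "decidable_rel 2 Q"
    "\<forall>xs. length xs = 1 \<longrightarrow> (S xs \<longleftrightarrow> (\<exists>y. \<not> Q (y # xs)))"
    by (auto simp: numeral_eq_Suc)
  then obtain f where f: "total_rec 2 f" "\<forall>xs. length xs = 2 \<longrightarrow> (Q xs \<longleftrightarrow> f xs = 0)"
    by (auto simp: decidable_rel_def)
  obtain e where e: "\<forall>x. (\<exists>y. f [y, x] \<noteq> 0) \<longleftrightarrow> sigma1_univ e x"
    using sigma1_univ_enumerates[OF f(1)] by blast
  have "S [x] \<longleftrightarrow> univ_sigma 0 e x" for x using Q(2) f(2) e by simp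
  then show ?case by blast
next
  case (Suc q)
  then obtain Q where Q: "sigma_rel (Suc q) 2 Q"
    "\<forall>xs. length xs = 1 \<longrightarrow> (S xs \<longleftrightarrow> (\<exists>y. \<not> Q (y # xs)))"
    by (auto simp: numeral_eq_Suc)
  let ?unpair = "[App PairFstX [V 0], App PairSndX [V 0]]"
  have "sigma_rel (Suc q) 1 (\<lambda>xs. Q (map (\<lambda>g. eval_expr g xs) ?unpair))"
    by (rule sigma_rel_subst[OF Q(1)]) auto
  then obtain e where e: "\<forall>c. Q (map (\<lambda>g. eval_expr g [c]) ?unpair) \<longleftrightarrow> univ_sigma q e c"
    using Suc.IH by blast
  have "S [x] \<longleftrightarrow> univ_sigma (Suc q) e x" for x
  proof -
    have "S [x] \<longleftrightarrow> (\<exists>y. \<not> Q [y, x])" using Q(2) by simp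
    also have "\<dots> \<longleftrightarrow> (\<exists>y. \<not> univ_sigma q e (prod_encode (y, x)))"
      using e[rule_format, of "prod_encode (_, x)"] by simp
    finally show ?thesis by simp
  qed
  then show ?case by blast
qed

definition halting_set :: "nat \<Rightarrow> bool" where
  "halting_set x \<longleftrightarrow> sigma1_univ x x"

lemma halting_set_undecidable: "\<not> decidable_rel 1 (\<lambda>xs. halting_set (xs ! 0))"
proof
  assume d: "decidable_rel 1 (\<lambda>xs. halting_set (xs ! 0))"
  have d2: "decidable_rel 2 (\<lambda>xs. halting_set (tl xs ! 0))"
    using decidable_rel_tl[OF d] by (simp add: numeral_eq_Suc)
  have s1: "sigma_rel (Suc 0) 1 (\<lambda>xs. \<not> halting_set (xs ! 0))" unfolding sigma_rel.simps
    by (rule exI[of _ "\<lambda>xs. halting_set (tl xs ! 0)"])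
      (use d2 in \<open>auto simp: numeral_eq_Suc\<close>)
  obtain e where "\<forall>x. (\<not> halting_set ([x] ! 0)) \<longleftrightarrow> univ_sigma 0 e x"
    using univ_sigma_enumerates[OF s1] by blast
  then have "\<not> halting_set e \<longleftrightarrow> sigma1_univ e e" by simp
  then show False by (simp add: halting_set_def)
qed

section \<open>The equivalence relation\<close>

text \<open>A number \<open>z\<close> denotes the position \<open>pair_snd z\<close> of the block \<open>b = pair_fst z\<close>; the block
  \<open>b = \<langle>e, c\<rangle>\<close> is a coded list \<open>c\<close> together with an index \<open>e\<close> of a \<open>\<Sigma>\<^sub>q\<^sub>+\<^sub>1\<close> relation.\<close>

definition block_size :: "nat \<Rightarrow> nat" where
  "block_size b = code_length (pair_snd b)"

definition block_edge :: "nat \<Rightarrow> nat \<Rightarrow> nat \<Rightarrow> nat \<Rightarrow> bool" where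
  "block_edge q b j j' \<longleftrightarrow>
     univ_sigma q (pair_fst b) (prod_encode (code_nth (pair_snd b) j, code_nth (pair_snd b) j')) \<or>
     univ_sigma q (pair_fst b) (prod_encode (code_nth (pair_snd b) j', code_nth (pair_snd b) j))"

fun block_path :: "nat \<Rightarrow> nat \<Rightarrow> nat list \<Rightarrow> bool" where
  "block_path q b [] = False"
| "block_path q b [a] = (a < block_size b)"
| "block_path q b (a # c # r) = (a < block_size b \<and> block_edge q b a c \<and> block_path q b (c # r))"

definition block_connected :: "nat \<Rightarrow> nat \<Rightarrow> nat \<Rightarrow> nat \<Rightarrow> bool" where
  "block_connected q b i i' \<longleftrightarrow> (\<exists>\<pi>. block_path q b \<pi> \<and> hd \<pi> = i \<and> last \<pi> = i')"

definition block_eqrel :: "nat \<Rightarrow> nat \<Rightarrow> nat \<Rightarrow> bool" where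
  "block_eqrel q z z' \<longleftrightarrow> z = z' \<or>
     (pair_fst z = pair_fst z' \<and> block_connected q (pair_fst z) (pair_snd z) (pair_snd z'))"

lemma block_edge_sym: "block_edge q b j j' \<longleftrightarrow> block_edge q b j' j"
  by (auto simp: block_edge_def)

lemma block_path_bounded: "block_path q b \<pi> \<Longrightarrow> a \<in> set \<pi> \<Longrightarrow> a < block_size b"
  by (induction q b \<pi> rule: block_path.induct) auto

lemma block_path_append:
  "block_path q b \<pi>1 \<Longrightarrow> block_path q b \<pi>2 \<Longrightarrow> last \<pi>1 = hd \<pi>2 \<Longrightarrow> block_path q b (\<pi>1 @ tl \<pi>2)"
proof (induction q b \<pi>1 rule: block_path.induct)
  case (2 q b a)
  then show ?case by (cases \<pi>2) auto
next
  case (3 q b a c r)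
  then show ?case by (cases r) auto
qed simp

lemma block_path_snoc:
  "block_path q b \<pi> \<Longrightarrow> block_edge q b (last \<pi>) a \<Longrightarrow> a < block_size b \<Longrightarrow> block_path q b (\<pi> @ [a])"
  using block_path_append[of q b \<pi> "[last \<pi>, a]"] block_path_bounded[of q b \<pi> "last \<pi>"]
  by (cases \<pi>) auto

lemma block_path_rev: "block_path q b \<pi> \<Longrightarrow> block_path q b (rev \<pi>)"
proof (induction q b \<pi> rule: block_path.induct)
  case (3 q b a c r)
  then have "block_path q b (rev (c # r))" by simp
  moreover have "last (rev (c # r)) = c" by simp
  ultimately show ?case
    using 3 block_path_snoc[of q b "rev (c # r)" a] by (simp add: block_edge_sym)
qed auto

lemma block_connected_sym: "block_connected q b i i' \<Longrightarrow> block_connected q b i' i"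
  unfolding block_connected_def
proof (elim exE conjE)
  fix \<pi> assume "block_path q b \<pi>" "hd \<pi> = i" "last \<pi> = i'"
  moreover have "\<pi> \<noteq> []" using \<open>block_path q b \<pi>\<close> by auto
  ultimately show "\<exists>\<pi>. block_path q b \<pi> \<and> hd \<pi> = i' \<and> last \<pi> = i"
    by (intro exI[of _ "rev \<pi>"]) (simp add: block_path_rev hd_rev last_rev)
qed

lemma block_path_not_Nil: "block_path q b \<pi> \<Longrightarrow> \<pi> \<noteq> []" by auto

lemma last_append_tl: "\<pi>1 \<noteq> [] \<Longrightarrow> \<pi>2 \<noteq> [] \<Longrightarrow> last \<pi>1 = hd \<pi>2 \<Longrightarrow> last (\<pi>1 @ tl \<pi>2) = last \<pi>2"
  by (cases \<pi>2) auto

lemma block_connected_trans: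
  "block_connected q b i j \<Longrightarrow> block_connected q b j k \<Longrightarrow> block_connected q b i k"
  unfolding block_connected_def
proof (elim exE conjE)
  fix \<pi>1 \<pi>2
  assume a: "block_path q b \<pi>1" "hd \<pi>1 = i" "last \<pi>1 = j"
    "block_path q b \<pi>2" "hd \<pi>2 = j" "last \<pi>2 = k"
  have ne: "\<pi>1 \<noteq> []" "\<pi>2 \<noteq> []" using a by auto
  show "\<exists>\<pi>. block_path q b \<pi> \<and> hd \<pi> = i \<and> last \<pi> = k"
  proof (intro exI[of _ "\<pi>1 @ tl \<pi>2"] conjI)
    have e: "last \<pi>1 = hd \<pi>2" using a by simp
    show "block_path q b (\<pi>1 @ tl \<pi>2)" by (rule block_path_append[OF a(1) a(4) e])
    show "last (\<pi>1 @ tl \<pi>2) = k" using last_append_tl[OF ne e] a by simp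
    show "hd (\<pi>1 @ tl \<pi>2) = i" using ne a by simp
  qed
qed

lemma equivp_block_eqrel: "equivp (block_eqrel q)"
proof (rule equivpI)
  show "reflp (block_eqrel q)" by (auto simp: reflp_def block_eqrel_def)
  show "symp (block_eqrel q)" by (auto simp: symp_def block_eqrel_def intro: block_connected_sym)
  show "transp (block_eqrel q)"
    unfolding transp_def block_eqrel_def by (metis block_connected_trans)
qed

lemma block_connected_bounded: "block_connected q b i i' \<Longrightarrow> i < block_size b"
  unfolding block_connected_def by (metis block_path_bounded block_path_not_Nil hd_in_set)

lemma finite_block_eqrel_class: "finite {z. block_eqrel q z z0}"
proof -
  let ?block = "(\<lambda>i. prod_encode (pair_fst z0, i)) ` {..<block_size (pair_fst z0)}"
  have "{z. block_eqrel q z z0} \<subseteq> insert z0 ?block"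
  proof
    fix z assume "z \<in> {z. block_eqrel q z z0}"
    then have "z = z0 \<or> (pair_fst z = pair_fst z0 \<and> pair_snd z < block_size (pair_fst z0))"
      by (auto simp: block_eqrel_def dest: block_connected_bounded)
    then show "z \<in> insert z0 ?block"
      by (metis (mono_tags, lifting) imageI insertCI lessThan_iff prod_encode_pair_fst_snd)
  qed
  then show ?thesis by (rule finite_subset) simp
qed

lemma block_path_iff_nth:
  "\<pi> \<noteq> [] \<Longrightarrow> block_path q b \<pi> \<longleftrightarrow> (\<forall>k<length \<pi>. \<pi> ! k < block_size b) \<and>
     (\<forall>k. Suc k < length \<pi> \<longrightarrow> block_edge q b (\<pi> ! k) (\<pi> ! Suc k))"
proof (induction q b \<pi> rule: block_path.induct)
  case (3 q b a c r)
  have IH: "block_path q b (c # r) \<longleftrightarrow> (\<forall>k<length (c # r). (c # r) ! k < block_size b) \<and>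
      (\<forall>k. Suc k < length (c # r) \<longrightarrow> block_edge q b ((c # r) ! k) ((c # r) ! Suc k))"
    using 3 by simp
  show ?case unfolding block_path.simps(3) IH
    by (simp only: length_Cons All_less_Suc2 nth_Cons_0 nth_Cons_Suc Suc_less_eq)
       (auto simp: All_less_Suc2)
qed auto

text \<open>A witness \<open>w\<close> for \<open>block_eqrel q z z'\<close> pairs a path \<open>\<pi>\<close> (a coded list of positions) with one
  code \<open>d\<^sub>k\<close> per step: \<open>pair_fst d\<^sub>k\<close> tells in which direction the step is an instance of
  \<open>univ_sigma q e\<close>, and \<open>pair_snd d\<^sub>k\<close> is the witness of that \<open>\<Sigma>\<close> statement.\<close>

definition edge_code :: "nat \<Rightarrow> nat \<Rightarrow> nat \<Rightarrow> nat \<Rightarrow> nat" where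
  "edge_code c d i j = (if pair_fst d = 0 then prod_encode (code_nth c i, code_nth c j)
     else prod_encode (code_nth c j, code_nth c i))"

definition path_edge_code :: "nat \<Rightarrow> nat \<Rightarrow> nat \<Rightarrow> nat" where
  "path_edge_code w z k = edge_code (pair_snd (pair_fst z)) (code_nth (pair_snd w) k)
     (code_nth (pair_fst w) k) (code_nth (pair_fst w) (Suc k))"

definition well_shaped_witness :: "nat \<Rightarrow> nat \<Rightarrow> nat \<Rightarrow> bool" where
  "well_shaped_witness w z z' \<longleftrightarrow> pair_fst z = pair_fst z' \<and> code_length (pair_fst w) \<noteq> 0 \<and>
     code_nth (pair_fst w) 0 = pair_snd z \<and>
     code_nth (pair_fst w) (code_length (pair_fst w) - 1) = pair_snd z' \<and>
     (\<forall>k<code_length (pair_fst w). code_nth (pair_fst w) k < code_length (pair_snd (pair_fst z)))"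

definition witness_fails :: "(nat list \<Rightarrow> bool) \<Rightarrow> nat \<Rightarrow> nat \<Rightarrow> nat \<Rightarrow> bool" where
  "witness_fails Vr w z z' \<longleftrightarrow> z \<noteq> z' \<and> (\<not> well_shaped_witness w z z' \<or>
     (\<exists>k<code_length (pair_fst w) - 1.
        Vr [pair_snd (code_nth (pair_snd w) k), pair_fst (pair_fst z), path_edge_code w z k]))"

lemma block_edge_iff_edge_witness:
  assumes V: "\<forall>e c. univ_sigma q e c \<longleftrightarrow> (\<exists>y. \<not> Vr [y, e, c])"
  shows "block_edge q b i j \<longleftrightarrow> (\<exists>d. \<not> Vr [pair_snd d, pair_fst b, edge_code (pair_snd b) d i j])"
proof
  assume "block_edge q b i j"
  then consider
      (fwd) y where "\<not> Vr [y, pair_fst b, prod_encode (code_nth (pair_snd b) i, code_nth (pair_snd b) j)]"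
    | (bwd) y where "\<not> Vr [y, pair_fst b, prod_encode (code_nth (pair_snd b) j, code_nth (pair_snd b) i)]"
    using V unfolding block_edge_def by blast
  then show "\<exists>d. \<not> Vr [pair_snd d, pair_fst b, edge_code (pair_snd b) d i j]"
  proof cases
    case fwd
    then show ?thesis by (intro exI[of _ "prod_encode (0, y)"]) (simp add: edge_code_def)
  next
    case bwd
    then show ?thesis by (intro exI[of _ "prod_encode (1, y)"]) (simp add: edge_code_def)
  qed
next
  assume "\<exists>d. \<not> Vr [pair_snd d, pair_fst b, edge_code (pair_snd b) d i j]"
  then show "block_edge q b i j"
    using V unfolding block_edge_def edge_code_def by (metis (full_types))
qed

lemma block_eqrel_if_witness:
  assumes V: "\<forall>e c. univ_sigma q e c \<longleftrightarrow> (\<exists>y. \<not> Vr [y, e, c])"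
    and w: "\<not> witness_fails Vr w z z'"
  shows "block_eqrel q z z'"
proof (cases "z = z'")
  case False
  then have shaped: "well_shaped_witness w z z'"
    and steps: "\<forall>k<code_length (pair_fst w) - 1.
      \<not> Vr [pair_snd (code_nth (pair_snd w) k), pair_fst (pair_fst z), path_edge_code w z k]"
    using w by (auto simp: witness_fails_def)
  define \<pi> where "\<pi> = list_decode (pair_fst w)"
  have pw: "pair_fst w = list_encode \<pi>" by (simp add: \<pi>_def)
  have ne: "\<pi> \<noteq> []" using shaped by (simp add: well_shaped_witness_def pw)
  have nth: "code_nth (pair_fst w) k = \<pi> ! k" if "k < length \<pi>" for k
    using that by (simp add: pw nth_default_def)
  have "block_path q (pair_fst z) \<pi>"
  proof (subst block_path_iff_nth[OF ne], intro conjI allI impI)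
    fix k assume "k < length \<pi>"
    then show "\<pi> ! k < block_size (pair_fst z)"
      using shaped nth by (auto simp: well_shaped_witness_def block_size_def pw)
  next
    fix k assume k: "Suc k < length \<pi>"
    then have "\<not> Vr [pair_snd (code_nth (pair_snd w) k), pair_fst (pair_fst z),
        edge_code (pair_snd (pair_fst z)) (code_nth (pair_snd w) k) (\<pi> ! k) (\<pi> ! Suc k)]"
      using steps[rule_format, of k] by (simp add: pw path_edge_code_def nth_default_nth)
    then show "block_edge q (pair_fst z) (\<pi> ! k) (\<pi> ! Suc k)"
      using block_edge_iff_edge_witness[OF V] by blast
  qed
  moreover have "hd \<pi> = pair_snd z" "last \<pi> = pair_snd z'"
    using shaped ne nth[of 0] nth[of "length \<pi> - 1"]
    by (simp_all add: well_shaped_witness_def hd_conv_nth last_conv_nth pw)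
  ultimately show ?thesis
    using shaped by (auto simp: block_eqrel_def block_connected_def well_shaped_witness_def)
qed (simp add: block_eqrel_def)

lemma witness_if_block_eqrel:
  assumes V: "\<forall>e c. univ_sigma q e c \<longleftrightarrow> (\<exists>y. \<not> Vr [y, e, c])"
    and "block_eqrel q z z'"
  shows "\<exists>w. \<not> witness_fails Vr w z z'"
proof (cases "z = z'")
  case False
  then obtain \<pi> where \<pi>: "pair_fst z = pair_fst z'" "block_path q (pair_fst z) \<pi>"
    "hd \<pi> = pair_snd z" "last \<pi> = pair_snd z'"
    using assms(2) by (auto simp: block_eqrel_def block_connected_def)
  have ne: "\<pi> \<noteq> []" using \<pi> by auto
  note path = \<pi>(2)[unfolded block_path_iff_nth[OF ne]]
  let ?c = "pair_snd (pair_fst z)" and ?e = "pair_fst (pair_fst z)"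
  have "\<forall>k. \<exists>d. Suc k < length \<pi> \<longrightarrow> \<not> Vr [pair_snd d, ?e, edge_code ?c d (\<pi> ! k) (\<pi> ! Suc k)]"
    using path block_edge_iff_edge_witness[OF V] by blast
  then obtain D where D: "\<And>k. Suc k < length \<pi>
      \<Longrightarrow> \<not> Vr [pair_snd (D k), ?e, edge_code ?c (D k) (\<pi> ! k) (\<pi> ! Suc k)]"
    by metis
  define w where "w = prod_encode (list_encode \<pi>, list_encode (map D [0..<length \<pi>]))"
  have pw: "pair_fst w = list_encode \<pi>" "pair_snd w = list_encode (map D [0..<length \<pi>])"
    by (simp_all add: w_def)
  have "well_shaped_witness w z z'" unfolding well_shaped_witness_def pw
    using \<pi> ne path by (auto simp: nth_default_def hd_conv_nth last_conv_nth block_size_def)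
  moreover have "\<not> Vr [pair_snd (code_nth (pair_snd w) k), ?e, path_edge_code w z k]"
    if "k < code_length (pair_fst w) - 1" for k
  proof -
    have k: "Suc k < length \<pi>" using that by (simp add: pw)
    show ?thesis using D[OF k] k by (simp add: path_edge_code_def pw nth_default_def)
  qed
  ultimately show ?thesis by (intro exI[of _ w]) (simp add: witness_fails_def)
qed (simp add: witness_fails_def)

lemma block_eqrel_iff_witness:
  assumes "\<forall>e c. univ_sigma q e c \<longleftrightarrow> (\<exists>y. \<not> Vr [y, e, c])"
  shows "block_eqrel q z z' \<longleftrightarrow> (\<exists>w. \<not> witness_fails Vr w z z')"
  using block_eqrel_if_witness[OF assms] witness_if_block_eqrel[OF assms] by blast

definition "EdgeSrcX =
  App CodeNthX [App PairSndX [App PairFstX [V 2]], App CodeNthX [App PairFstX [V 1], V 0]]"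
definition "EdgeDstX =
  App CodeNthX [App PairSndX [App PairFstX [V 2]], App CodeNthX [App PairFstX [V 1], Add (V 0) (C 1)]]"
definition "EdgeX = IfX (EqX (App PairFstX [App CodeNthX [App PairSndX [V 1], V 0]]) (C 0))
  (App PairX [EdgeSrcX, EdgeDstX]) (App PairX [EdgeDstX, EdgeSrcX])"
definition "EdgeSearchX = App PairSndX [App CodeNthX [App PairSndX [V 1], V 0]]"
definition "BlockIndexX = App PairFstX [App PairFstX [V 2]]"
definition "WellShapedX = AndX (EqX (App PairFstX [V 1]) (App PairFstX [V 2]))
  (AndX (SgnX (App CodeLengthX [App PairFstX [V 0]]))
  (AndX (EqX (App CodeNthX [App PairFstX [V 0], C 0]) (App PairSndX [V 1]))
  (AndX (EqX (App CodeNthX [App PairFstX [V 0], Sub (App CodeLengthX [App PairFstX [V 0]]) (C 1)])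
          (App PairSndX [V 2]))
    (AllLessX (App CodeLengthX [App PairFstX [V 0]])
      (LessX (App CodeNthX [App PairFstX [V 1], V 0])
        (App CodeLengthX [App PairSndX [App PairFstX [V 2]]]))))))"
definition "WitnessStepsX = Sub (App CodeLengthX [App PairFstX [V 0]]) (C 1)"

lemma eval_EdgeX: "eval_expr EdgeX [k, w, z, z'] = path_edge_code w z k"
  by (simp add: EdgeX_def EdgeSrcX_def EdgeDstX_def path_edge_code_def edge_code_def)

lemma eval_EdgeSearchX: "eval_expr EdgeSearchX [k, w, z, z'] = pair_snd (code_nth (pair_snd w) k)"
  by (simp add: EdgeSearchX_def)

lemma eval_BlockIndexX: "eval_expr BlockIndexX [k, w, z, z'] = pair_fst (pair_fst z)"
  by (simp add: BlockIndexX_def)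

lemma eval_WellShapedX: "eval_expr WellShapedX [w, z, z'] \<noteq> 0 \<longleftrightarrow> well_shaped_witness w z z'"
  by (auto simp: WellShapedX_def well_shaped_witness_def)

lemma eval_WitnessStepsX: "eval_expr WitnessStepsX [w, z, z'] = code_length (pair_fst w) - 1"
  by (simp add: WitnessStepsX_def)

lemma wf_edge_exprs: "wf_expr 4 EdgeX" "wf_expr 4 EdgeSearchX" "wf_expr 4 BlockIndexX"
  by (simp_all add: EdgeX_def EdgeSrcX_def EdgeDstX_def EdgeSearchX_def BlockIndexX_def numeral_eq_Suc)

lemma wf_WellShapedX: "wf_expr 3 WellShapedX" and wf_WitnessStepsX: "wf_expr 3 WitnessStepsX"
  by (simp_all add: WellShapedX_def WitnessStepsX_def numeral_eq_Suc)

lemma sigma_rel_witness_fails: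
  assumes Vr: "sigma_rel q 3 Vr"
  shows "sigma_rel q 3 (\<lambda>xs. witness_fails Vr (xs ! 0) (xs ! 1) (xs ! 2))"
proof -
  let ?step = "\<lambda>xs. Vr (map (\<lambda>g. eval_expr g xs) [EdgeSearchX, BlockIndexX, EdgeX])"
  have "sigma_rel q 4 ?step"
    by (rule sigma_rel_subst[OF Vr]) (auto simp: wf_edge_exprs)
  then have "sigma_rel q (Suc 3) ?step" by simp
  then have "sigma_rel q 3 (\<lambda>xs. \<exists>k<eval_expr WitnessStepsX xs. ?step (k # xs))"
    using wf_WitnessStepsX by (rule sigma_rel_bounded_ex)
  moreover have "decidable_rel 3 (\<lambda>xs. \<not> well_shaped_witness (xs ! 0) (xs ! 1) (xs ! 2))"
  proof (rule decidable_relI[where e = "NotX WellShapedX"])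
    show "wf_expr 3 (NotX WellShapedX)" using wf_WellShapedX by simp
    fix xs :: "nat list" assume "length xs = 3"
    then obtain w z z' where "xs = [w, z, z']" by (auto simp: numeral_eq_Suc length_Suc_conv)
    then show "(\<not> well_shaped_witness (xs ! 0) (xs ! 1) (xs ! 2)) \<longleftrightarrow>
        eval_expr (NotX WellShapedX) xs \<noteq> 0"
      using eval_WellShapedX[of w z z'] by auto
  qed
  ultimately have "sigma_rel q 3 (\<lambda>xs. (\<exists>k<eval_expr WitnessStepsX xs. ?step (k # xs)) \<or>
      \<not> well_shaped_witness (xs ! 0) (xs ! 1) (xs ! 2))"
    by (rule sigma_rel_disj_decidable)
  moreover have "decidable_rel 3 (\<lambda>xs. xs ! 1 \<noteq> xs ! 2)"
    by (rule decidable_relI[where e = "NotX (EqX (V 1) (V 2))"]) auto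
  ultimately have "sigma_rel q 3 (\<lambda>xs. ((\<exists>k<eval_expr WitnessStepsX xs. ?step (k # xs)) \<or>
      \<not> well_shaped_witness (xs ! 0) (xs ! 1) (xs ! 2)) \<and> xs ! 1 \<noteq> xs ! 2)"
    by (rule sigma_rel_conj_decidable)
  then show ?thesis
  proof (rule sigma_rel_cong)
    fix xs :: "nat list" assume "length xs = 3"
    then obtain w z z' where xs: "xs = [w, z, z']" by (auto simp: numeral_eq_Suc length_Suc_conv)
    show "witness_fails Vr (xs ! 0) (xs ! 1) (xs ! 2) \<longleftrightarrow>
      ((\<exists>k<eval_expr WitnessStepsX xs. ?step (k # xs)) \<or> \<not> well_shaped_witness (xs ! 0) (xs ! 1) (xs ! 2)) \<and>
      xs ! 1 \<noteq> xs ! 2"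
      unfolding xs
      by (auto simp: witness_fails_def eval_EdgeX eval_EdgeSearchX eval_BlockIndexX eval_WitnessStepsX)
  qed
qed

lemma sigma_rel_block_eqrel: "sigma_rel (Suc q) 2 (\<lambda>xs. block_eqrel q (xs ! 0) (xs ! 1))"
proof -
  obtain Vr where Vr: "sigma_rel q 3 Vr"
    "\<forall>xs. length xs = 2 \<longrightarrow> (univ_sigma q (xs ! 0) (xs ! 1) \<longleftrightarrow> (\<exists>y. \<not> Vr (y # xs)))"
    using sigma_rel_univ_sigma[of q] by (auto simp: numeral_eq_Suc)
  have V: "\<forall>e c. univ_sigma q e c \<longleftrightarrow> (\<exists>y. \<not> Vr [y, e, c])"
    using Vr(2) by (auto dest: spec[of _ "[_, _]"])
  show ?thesis unfolding sigma_rel.simps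
    by (rule exI[of _ "\<lambda>xs. witness_fails Vr (xs ! 0) (xs ! 1) (xs ! 2)"])
      (use sigma_rel_witness_fails[OF Vr(1)] block_eqrel_iff_witness[OF V] in
        \<open>auto simp: numeral_eq_Suc length_Suc_conv\<close>)
qed

section \<open>Finitary completeness\<close>

lemma sigma_eqrel_index:
  assumes "sigma_rel (Suc q) 2 (\<lambda>xs. F (xs ! 0) (xs ! 1))"
  shows "\<exists>e. \<forall>a b. F a b \<longleftrightarrow> univ_sigma q e (prod_encode (a, b))"
proof -
  let ?unpair = "[App PairFstX [V 0], App PairSndX [V 0]]"
  have "sigma_rel (Suc q) 1 (\<lambda>xs. (\<lambda>ys. F (ys ! 0) (ys ! 1)) (map (\<lambda>g. eval_expr g xs) ?unpair))"
    by (rule sigma_rel_subst[OF assms]) auto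
  then obtain e where e: "\<forall>x. (\<lambda>ys. F (ys ! 0) (ys ! 1)) (map (\<lambda>g. eval_expr g [x]) ?unpair)
      \<longleftrightarrow> univ_sigma q e x"
    using univ_sigma_enumerates by blast
  have "F a b \<longleftrightarrow> univ_sigma q e (prod_encode (a, b))" for a b
    using e[rule_format, of "prod_encode (a, b)"] by simp
  then show ?thesis by blast
qed

definition block_reduction :: "nat \<Rightarrow> nat \<Rightarrow> nat" where
  "block_reduction e c =
     list_encode (map (\<lambda>i. prod_encode (prod_encode (e, c), i)) [0..<code_length c])"

lemma rec_nat_code_build:
  "k \<le> n \<Longrightarrow> rec_nat 0 (\<lambda>k r. code_Cons (T (n - 1 - k)) r) k = list_encode (map T [n - k..<n])"
proof (induction k)
  case 0
  then show ?case by simp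
next
  case (Suc k)
  then have IH: "rec_nat 0 (\<lambda>k r. code_Cons (T (n - 1 - k)) r) k = list_encode (map T [n - k..<n])"
    by simp
  have "[n - Suc k..<n] = (n - Suc k) # [n - k..<n]"
    using Suc.prems by (simp add: upt_conv_Cons Suc_diff_Suc)
  moreover have "n - 1 - k = n - Suc k" by simp
  ultimately show ?case using IH by simp
qed

lemma computable_block_reduction: "computable1 (block_reduction e)"
proof -
  define BlockReductionX where "BlockReductionX = Rec (App CodeLengthX [V 0]) (C 0)
    (App CodeConsX [App PairX [App PairX [C e, V 2], Sub (Sub (App CodeLengthX [V 2]) (C 1)) (V 0)],
       V 1])"
  have wf: "wf_expr 1 BlockReductionX" by (simp add: BlockReductionX_def)
  have eval_BlockReductionX: "eval_expr BlockReductionX [c] = block_reduction e c" for c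
  proof -
    let ?T = "\<lambda>i. prod_encode (prod_encode (e, c), i)"
    have "eval_expr BlockReductionX [c]
        = rec_nat 0 (\<lambda>k r. code_Cons (?T (code_length c - 1 - k)) r) (code_length c)"
      by (simp add: BlockReductionX_def)
    also have "\<dots> = block_reduction e c"
      by (subst rec_nat_code_build) (simp_all add: block_reduction_def)
    finally show ?thesis .
  qed
  show ?thesis unfolding computable1_def
    by (rule total_rec_ext[OF total_rec_eval_expr[OF wf]])
      (auto simp: eval_BlockReductionX length_Suc_conv)
qed

lemma block_path_reflects:
  assumes eqv: "equivp F"
    and G: "\<And>a c. a < length xs \<Longrightarrow> c < length xs \<Longrightarrow> block_edge q b a c \<longleftrightarrow> F (xs ! a) (xs ! c)"
    and L: "block_size b = length xs"
  shows "block_path q b \<pi> \<Longrightarrow> F (xs ! hd \<pi>) (xs ! last \<pi>)"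
proof (induction \<pi>)
  case (Cons a r)
  show ?case
  proof (cases r)
    case Nil
    then show ?thesis using eqv by (simp add: equivp_reflp)
  next
    case (Cons c r')
    have ch: "a < block_size b" "block_edge q b a c" "block_path q b (c # r')"
      using Cons.prems Cons by auto
    have c: "c < block_size b" using block_path_bounded[OF ch(3)] by simp
    have "F (xs ! a) (xs ! c)" using G ch c L by simp
    moreover have "F (xs ! c) (xs ! last r)" using Cons.IH ch(3) Cons by simp
    ultimately show ?thesis using eqv Cons by (auto elim: equivp_transp)
  qed
qed simp

lemma block_eqrel_positions_iff:
  assumes eqv: "equivp F" and e: "\<forall>a b. F a b \<longleftrightarrow> univ_sigma q e (prod_encode (a, b))"
    and ij: "i < length xs" "j < length xs"
  defines "t \<equiv> prod_encode (e, list_encode xs)"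
  shows "block_eqrel q (prod_encode (t, i)) (prod_encode (t, j)) \<longleftrightarrow> F (xs ! i) (xs ! j)"
proof
  have size: "block_size t = length xs" by (simp add: t_def block_size_def)
  have edge: "block_edge q t a c \<longleftrightarrow> F (xs ! a) (xs ! c)" if "a < length xs" "c < length xs" for a c
    using that e eqv by (auto simp: t_def block_edge_def nth_default_def dest: equivp_symp)
  assume "block_eqrel q (prod_encode (t, i)) (prod_encode (t, j))"
  then consider "i = j" | "block_connected q t i j" by (auto simp: block_eqrel_def)
  then show "F (xs ! i) (xs ! j)"
  proof cases
    case 1
    then show ?thesis using eqv by (simp add: equivp_reflp)
  next
    case 2
    then obtain \<pi> where "block_path q t \<pi>" "hd \<pi> = i" "last \<pi> = j"
      by (auto simp: block_connected_def)
    then show ?thesis using block_path_reflects[OF eqv edge size] by blast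
  qed
next
  have size: "block_size t = length xs" by (simp add: t_def block_size_def)
  assume "F (xs ! i) (xs ! j)"
  then have "block_path q t [i, j]"
    using ij e eqv size by (auto simp: t_def block_edge_def nth_default_def)
  then have "block_connected q t i j"
    unfolding block_connected_def by (intro exI[of _ "[i, j]"]) simp
  then show "block_eqrel q (prod_encode (t, i)) (prod_encode (t, j))" by (simp add: block_eqrel_def)
qed

lemma block_eqrel_finitary_complete:
  assumes "sigma_eqrel (Suc q) F"
  shows "finitary_reducible F (block_eqrel q)"
proof -
  have eqv: "equivp F" and "sigma_rel (Suc q) 2 (\<lambda>xs. F (xs ! 0) (xs ! 1))"
    using assms by (auto simp: sigma_eqrel_def)
  then obtain e where e: "\<forall>a b. F a b \<longleftrightarrow> univ_sigma q e (prod_encode (a, b))"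
    using sigma_eqrel_index by blast
  have "\<exists>ys. block_reduction e (list_encode xs) = list_encode ys \<and> length ys = length xs \<and>
      (\<forall>i j. i < j \<and> j < length xs \<longrightarrow> (F (xs ! i) (xs ! j) \<longleftrightarrow> block_eqrel q (ys ! i) (ys ! j)))" for xs
    using block_eqrel_positions_iff[OF eqv e]
    by (intro exI[of _ "map (\<lambda>i. prod_encode (prod_encode (e, list_encode xs), i)) [0..<length xs]"])
      (simp add: block_reduction_def)
  then show ?thesis
    unfolding finitary_reducible_def using computable_block_reduction by blast
qed

section \<open>Failure of computable completeness\<close>

definition halting_eqrel :: "nat \<Rightarrow> nat \<Rightarrow> bool" where
  "halting_eqrel x y \<longleftrightarrow> x = y \<or> (halting_set x \<and> halting_set y)"

lemma equivp_halting_eqrel: "equivp halting_eqrel"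
  by (rule equivpI) (auto simp: reflp_def symp_def transp_def halting_eqrel_def)

lemma sigma_rel_halting_eqrel: "sigma_rel 1 2 (\<lambda>xs. halting_eqrel (xs ! 0) (xs ! 1))"
proof -
  define Q where "Q xs \<longleftrightarrow> xs ! 1 \<noteq> xs ! 2 \<and>
    \<not> (kleene_T (xs ! 1) (xs ! 1) (pair_fst (xs ! 0)) \<and> kleene_T (xs ! 2) (xs ! 2) (pair_snd (xs ! 0)))"
    for xs
  define QX where "QX = AndX (NotX (EqX (V 1) (V 2)))
    (NotX (AndX (App KleeneTX [V 1, V 1, App PairFstX [V 0]]) (App KleeneTX [V 2, V 2, App PairSndX [V 0]])))"
  have d: "decidable_rel 3 Q"
    by (rule decidable_relI[where e = QX]) (auto simp: Q_def QX_def numeral_eq_Suc)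
  have eq: "halting_eqrel x y \<longleftrightarrow> (\<exists>w. \<not> Q [w, x, y])" for x y
  proof
    assume "halting_eqrel x y"
    then consider "x = y" | "halting_set x \<and> halting_set y" by (auto simp: halting_eqrel_def)
    then show "\<exists>w. \<not> Q [w, x, y]"
    proof cases
      case 1
      then show ?thesis by (simp add: Q_def)
    next
      case 2
      then obtain a b where "kleene_T x x a" "kleene_T y y b"
        by (auto simp: halting_set_def sigma1_univ_def)
      then show ?thesis by (intro exI[of _ "prod_encode (a, b)"]) (simp add: Q_def)
    qed
  next
    assume "\<exists>w. \<not> Q [w, x, y]"
    then show "halting_eqrel x y"
      by (auto simp: Q_def halting_eqrel_def halting_set_def sigma1_univ_def)
  qed
  show ?thesis unfolding One_nat_def sigma_rel.simps
    by (rule exI[of _ Q]) (use d eq in \<open>auto simp: numeral_eq_Suc length_Suc_conv\<close>)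
qed

lemma finite_set_decidable_expr:
  "finite S \<Longrightarrow> \<exists>e. wf_expr 1 e \<and> (\<forall>x. eval_expr e [x] \<noteq> 0 \<longleftrightarrow> x \<in> S)"
proof (induction rule: finite_induct)
  case empty
  then show ?case by (intro exI[of _ "C 0"]) simp
next
  case (insert a S)
  then obtain e where "wf_expr 1 e" "\<forall>x. eval_expr e [x] \<noteq> 0 \<longleftrightarrow> x \<in> S" by blast
  then show ?case by (intro exI[of _ "OrX (EqX (V 0) (C a)) e"]) auto
qed

lemma decidable_rel_preimage_finite:
  assumes "computable1 g" "finite S"
  shows "decidable_rel 1 (\<lambda>xs. g (xs ! 0) \<in> S)"
proof -
  obtain e where e: "wf_expr 1 e" "\<forall>x. eval_expr e [x] \<noteq> 0 \<longleftrightarrow> x \<in> S"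
    using finite_set_decidable_expr[OF assms(2)] by blast
  show ?thesis
  proof (rule decidable_relI[where e = "App e [Fn (\<lambda>xs. g (hd xs))]"])
    show "wf_expr 1 (App e [Fn (\<lambda>xs. g (hd xs))])"
      using e(1) assms(1) by (simp add: computable1_def)
    fix xs :: "nat list" assume "length xs = 1"
    then obtain x where "xs = [x]" by (auto simp: length_Suc_conv)
    then show "g (xs ! 0) \<in> S \<longleftrightarrow> eval_expr (App e [Fn (\<lambda>xs. g (hd xs))]) xs \<noteq> 0"
      using e(2) by simp
  qed
qed

lemma halting_eqrel_not_reducible: "\<not> computably_reducible halting_eqrel (block_eqrel q)"
proof
  assume "computably_reducible halting_eqrel (block_eqrel q)"
  then obtain g where g: "computable1 g" "\<forall>x y. halting_eqrel x y \<longleftrightarrow> block_eqrel q (g x) (g y)"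
    by (auto simp: computably_reducible_def)
  have "decidable_rel 1 (\<lambda>xs. halting_set (xs ! 0))"
  proof (cases "\<exists>a. halting_set a")
    case False
    then show ?thesis by (intro decidable_relI[where e = "C 0"]) auto
  next
    case True
    then obtain a where a: "halting_set a" by blast
    have "halting_set x \<longleftrightarrow> g x \<in> {z. block_eqrel q z (g a)}" for x
      using g(2)[rule_format, of x a] a by (auto simp: halting_eqrel_def)
    with decidable_rel_preimage_finite[OF g(1) finite_block_eqrel_class] show ?thesis
      by simp
  qed
  then show False using halting_set_undecidable by blast
qed

theorem theorem4p12:
  fixes p :: nat
  assumes "p > 0"
  shows "\<exists>E. sigma_eqrel p E \<and>
             (\<forall>F. sigma_eqrel p F \<longrightarrow> finitary_reducible F E) \<and>
             (\<exists>F. sigma_eqrel p F \<and> \<not> computably_reducible F E)"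
proof -
  obtain q where p: "p = Suc q" using assms by (cases p) auto
  have "sigma_eqrel p (block_eqrel q)"
    unfolding p sigma_eqrel_def using equivp_block_eqrel sigma_rel_block_eqrel by blast
  moreover have "\<forall>F. sigma_eqrel p F \<longrightarrow> finitary_reducible F (block_eqrel q)"
    unfolding p using block_eqrel_finitary_complete by blast
  moreover have "sigma_eqrel p halting_eqrel" unfolding sigma_eqrel_def
    using equivp_halting_eqrel sigma_rel_mono[OF sigma_rel_halting_eqrel] assms by auto
  ultimately show ?thesis using halting_eqrel_not_reducible by blast
qed

end
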